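(* Let $\alpha\in(0,1)$ be irrational with negative continued fraction expansion $\alpha=[0;a_1,a_2,a_3,\ldots]^-$, and let $R:=\liminf_{i\to\infty}a_i$. Suppose $R\geq 3$. Let $\gamma^*\in(0,1)$ be the number defined (in the context below) from $\alpha$. If $R$ is finite, then $$\rho(\alpha)\geq M(\alpha,\gamma^* )\geq C(R):=\frac{(1-2\delta)(1-\beta)}{4(1-\delta\beta)},$$ where, for $R$ even, $\beta=\frac12\big(R-\sqrt{R^2-4}\big)$ and $\delta=\frac{1}{R+1-\beta}$, and, for $R$ odd, $\beta=\frac12\big(R+1-\sqrt{(R+1)^2-4}\big)$ and $\delta=\frac{1}{R-\beta}$. Explicitly, $C(R)=\frac14\cdot\frac{R-2}{\sqrt{R^2-4}+1}$ for even $R$ and $C(R)=\frac14\cdot\frac{2R-2-\sqrt{(R+1)^2-4}}{\sqrt{(R+1)^2-4}-1}$ for odd $R$. In particular, if $R\geq 3$ then $$\rho(\alpha)\geq C(3)=\frac{1}{6\sqrt3+8},$$ and if $R\geq 4$ then $$\rho(\alpha)\geq C(4)=\frac{1}{4\sqrt3+2}.$$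
   Context: For real $x$, $\|x\|$ denotes the distance from $x$ to the nearest integer. For irrational $\alpha$ and real $\gamma$, $M(\alpha,\gamma):=\liminf_{|n|\to\infty}|n|\,\|n\alpha-\gamma\|$ (over nonzero integers $n$), and $\rho(\alpha):=\sup_{\gamma\notin\mathbb{Z}+\alpha\mathbb{Z}}M(\alpha,\gamma)$. The negative continued fraction expansion of $\alpha\in(0,1)$ is $\alpha=\cfrac{1}{a_1-\cfrac{1}{a_2-\cfrac{1}{a_3-\cdots}}}=:[0;a_1,a_2,\ldots]^-$, where the integers $a_i\geq 2$ are produced by $\alpha_0:=\alpha$, $a_{n+1}:=\lceil 1/\alpha_n\rceil$, $\alpha_{n+1}:=\lceil 1/\alpha_n\rceil-1/\alpha_n$. The convergents $p_n/q_n$ satisfy $p_{n+1}=a_{n+1}p_n-p_{n-1}$, $q_{n+1}=a_{n+1}q_n-q_{n-1}$ with $p_0=0,p_{-1}=-1,q_0=1,q_{-1}=0$, and $D_n:=q_n\alpha-p_n$. Define integers $t_i$ by: $t_i=0$ if $a_i$ is even, and $t_i=(-1)^{j+1}$ if $a_i$ is the $j$-th odd partial quotient (counting odd terms of the sequence $a_1,a_2,\ldots$ in order). Then $\gamma^*:=\sum_{i=1}^\infty \tfrac12(a_i-2+t_i)D_{i-1}$. *)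

theory Defs
  imports "HOL-Analysis.Analysis"
begin

definition dist_int :: "real \<Rightarrow> real" where
  "dist_int x = min (x - of_int \<lfloor>x\<rfloor>) (of_int \<lceil>x\<rceil> - x)"

text \<open>M(alpha,gamma) = liminf over nonzero integers n with |n| to infinity of |n| * ||n alpha - gamma||.
  The cofinite filter on int is exactly the filter of |n| \<rightarrow> \<infinity>.\<close>
definition M_inh :: "real \<Rightarrow> real \<Rightarrow> ereal" where
  "M_inh \<alpha> \<gamma> = Liminf cofinite (\<lambda>n::int. ereal (\<bar>real_of_int n\<bar> * dist_int (real_of_int n * \<alpha> - \<gamma>)))"

definition rho :: "real \<Rightarrow> ereal" where
  "rho \<alpha> = (SUP \<gamma>\<in>- {of_int m + \<alpha> * of_int k | m k :: int. True}. M_inh \<alpha> \<gamma>)"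

fun ncf_rem :: "real \<Rightarrow> nat \<Rightarrow> real" where
  "ncf_rem \<alpha> 0 = \<alpha>"
| "ncf_rem \<alpha> (Suc n) = of_int \<lceil>1 / ncf_rem \<alpha> n\<rceil> - 1 / ncf_rem \<alpha> n"

text \<open>Partial quotients a_i for i >= 1 (index 0 unused, set to 0).\<close>
fun ncf_a :: "real \<Rightarrow> nat \<Rightarrow> int" where
  "ncf_a \<alpha> 0 = 0"
| "ncf_a \<alpha> (Suc n) = \<lceil>1 / ncf_rem \<alpha> n\<rceil>"

text \<open>Shifted convergents: ncf_p' alpha n = p_(n-1), ncf_q' alpha n = q_(n-1).\<close>
fun ncf_p' :: "real \<Rightarrow> nat \<Rightarrow> int" where
  "ncf_p' \<alpha> 0 = -1"
| "ncf_p' \<alpha> (Suc 0) = 0"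
| "ncf_p' \<alpha> (Suc (Suc n)) = ncf_a \<alpha> (Suc n) * ncf_p' \<alpha> (Suc n) - ncf_p' \<alpha> n"

fun ncf_q' :: "real \<Rightarrow> nat \<Rightarrow> int" where
  "ncf_q' \<alpha> 0 = 0"
| "ncf_q' \<alpha> (Suc 0) = 1"
| "ncf_q' \<alpha> (Suc (Suc n)) = ncf_a \<alpha> (Suc n) * ncf_q' \<alpha> (Suc n) - ncf_q' \<alpha> n"

definition ncf_p :: "real \<Rightarrow> nat \<Rightarrow> int" where "ncf_p \<alpha> n = ncf_p' \<alpha> (Suc n)"
definition ncf_q :: "real \<Rightarrow> nat \<Rightarrow> int" where "ncf_q \<alpha> n = ncf_q' \<alpha> (Suc n)"

definition ncf_D :: "real \<Rightarrow> nat \<Rightarrow> real" where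
  "ncf_D \<alpha> n = of_int (ncf_q \<alpha> n) * \<alpha> - of_int (ncf_p \<alpha> n)"

definition ncf_t :: "real \<Rightarrow> nat \<Rightarrow> int" where
  "ncf_t \<alpha> i = (if even (ncf_a \<alpha> i) then 0
      else (-1) ^ (card {k \<in> {1..i}. odd (ncf_a \<alpha> k)} + 1))"

definition gamma_star :: "real \<Rightarrow> real" where
  "gamma_star \<alpha> = (\<Sum>i. (of_int (ncf_a \<alpha> (Suc i)) - 2 + of_int (ncf_t \<alpha> (Suc i))) / 2 * ncf_D \<alpha> i)"

definition beta_R :: "int \<Rightarrow> real" where
  "beta_R R = (if even R then (R - sqrt (R^2 - 4)) / 2 else (R + 1 - sqrt ((R+1)^2 - 4)) / 2)"

definition delta_R :: "int \<Rightarrow> real" where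
  "delta_R R = (if even R then 1 / (R + 1 - beta_R R) else 1 / (R - beta_R R))"

definition C_R :: "int \<Rightarrow> real" where
  "C_R R = (1 - 2 * delta_R R) * (1 - beta_R R) / (4 * (1 - delta_R R * beta_R R))"

end

theory Submission
  imports Defs
begin

text \<open>For integers \<open>n, m\<close> put \<open>Y = m - n\<alpha> + \<gamma>\<^sup>*\<close>. Expanding the pair \<open>(n, Y)\<close> along the
  convergents gives half odd integer coordinates \<open>w\<^sub>j\<close> with \<open>n Y = P\<^sub>j(w\<^sub>j, w\<^sub>j\<^sub>+\<^sub>1)\<close>,
  where \<open>P\<^sub>j\<close> is a product of two linear forms built from \<open>q\<^sub>j\<^sub>-\<^sub>1, q\<^sub>j, D\<^sub>j\<^sub>-\<^sub>1, D\<^sub>j\<close>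
  and two digit sums \<open>\<Phi>\<^sub>j, E\<^sub>j\<close>; the digits \<open>t\<^sub>i\<close> are chosen exactly so that \<open>\<Phi>\<^sub>j\<close> and
  \<open>E\<^sub>j\<close> have opposite signs and stay within half a step of zero.

  For large \<open>|n|\<close> the \<open>|w\<^sub>j|\<close> start by decreasing, and being half odd integers they
  must stop, so there is a valley \<open>|w\<^sub>j| \<ge> |w\<^sub>j\<^sub>+\<^sub>1| \<le> |w\<^sub>j\<^sub>+\<^sub>2|\<close>. If two consecutive
  coordinates have opposite signs then \<open>|n Y| \<ge> 1/4\<close>. Otherwise concavity bounds
  \<open>P\<^sub>j(w\<^sub>j, w\<^sub>j\<^sub>+\<^sub>1)\<close> below by the values of \<open>P\<^sub>j\<close> and \<open>P\<^sub>j\<^sub>+\<^sub>1\<close> at \<open>(1/2, 1/2)\<close>. These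
  depend only on the ratios \<open>q\<^sub>j\<^sub>-\<^sub>1/q\<^sub>j\<close>, \<open>D\<^sub>j/D\<^sub>j\<^sub>-\<^sub>1\<close>, \<open>|\<Phi>\<^sub>j|/q\<^sub>j\<close>, \<open>|E\<^sub>j|/D\<^sub>j\<^sub>-\<^sub>1\<close>,
  which for partial quotients \<open>\<ge> R\<close> are driven by a contraction into a box determined by
  \<open>\<beta>\<close> and \<open>\<delta>\<close>; on that box the value is at least \<open>C(R)\<close>. The same descent shows that
  \<open>Y \<noteq> 0\<close> for all \<open>n, m\<close>, i.e. \<open>\<gamma>\<^sup>* \<notin> \<int> + \<alpha>\<int>\<close>, so \<open>\<rho>(\<alpha>) \<ge> M(\<alpha>, \<gamma>\<^sup>*)\<close>.\<close>

section \<open>Remainders and convergents\<close>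

lemma ncf_rem_bounds:
  assumes "0 < \<alpha>" "\<alpha> < 1" "\<alpha> \<notin> \<rat>"
  shows "0 < ncf_rem \<alpha> j \<and> ncf_rem \<alpha> j < 1 \<and> ncf_rem \<alpha> j \<notin> \<rat>"
proof (induction j)
  case 0
  then show ?case using assms by simp
next
  case (Suc j)
  define x where "x = ncf_rem \<alpha> j"
  have x: "0 < x" "x < 1" "x \<notin> \<rat>" using Suc x_def by auto
  have inv_irrational: "1/x \<notin> \<rat>"
    using x(3) by (metis Rats_inverse inverse_eq_divide inverse_inverse_eq)
  then have "1/x \<noteq> of_int \<lceil>1/x\<rceil>" by (metis Rats_of_int)
  then have "0 < of_int \<lceil>1/x\<rceil> - 1/x" "of_int \<lceil>1/x\<rceil> - 1/x < 1" by linarith+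
  moreover have "of_int \<lceil>1/x\<rceil> - 1/x \<notin> \<rat>"
  proof
    assume "of_int \<lceil>1/x\<rceil> - 1/x \<in> \<rat>"
    then have "of_int \<lceil>1/x\<rceil> - (of_int \<lceil>1/x\<rceil> - 1/x) \<in> \<rat>" using Rats_diff Rats_of_int by blast
    then show False using inv_irrational by simp
  qed
  ultimately show ?case by (simp add: x_def)
qed

locale ncf_irrational =
  fixes \<alpha> :: real
  assumes pos: "0 < \<alpha>" and less_one: "\<alpha> < 1" and irrational: "\<alpha> \<notin> \<rat>"
begin

lemma rem_pos: "0 < ncf_rem \<alpha> j"
  using ncf_rem_bounds[OF pos less_one irrational] by blast

lemma rem_less_one: "ncf_rem \<alpha> j < 1"
  using ncf_rem_bounds[OF pos less_one irrational] by blast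

lemma a_Suc_ge_two: "ncf_a \<alpha> (Suc j) \<ge> 2"
proof -
  have "1 / ncf_rem \<alpha> j > 1" using rem_pos[of j] rem_less_one[of j] by simp
  then show ?thesis by simp
qed

lemma rem_eq: "ncf_rem \<alpha> j = 1 / (of_int (ncf_a \<alpha> (Suc j)) - ncf_rem \<alpha> (Suc j))"
  using rem_pos[of j] by simp

end

lemma ncf_a_Suc_eq: "of_int (ncf_a \<alpha> (Suc j)) = ncf_rem \<alpha> (Suc j) + 1 / ncf_rem \<alpha> j"
  by simp

declare ncf_rem.simps(2)[simp del] ncf_a.simps(2)[simp del]

text \<open>Real-valued convergent data, with the index shift of \<open>ncf_q'\<close>:
  \<open>ncf_qr \<alpha> j = q\<^sub>j\<^sub>-\<^sub>1\<close> and \<open>ncf_Dr \<alpha> j = D\<^sub>j\<^sub>-\<^sub>1\<close>.\<close>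

definition ncf_qr :: "real \<Rightarrow> nat \<Rightarrow> real" where
  "ncf_qr \<alpha> j = of_int (ncf_q' \<alpha> j)"

definition ncf_Dr :: "real \<Rightarrow> nat \<Rightarrow> real" where
  "ncf_Dr \<alpha> j = of_int (ncf_q' \<alpha> j) * \<alpha> - of_int (ncf_p' \<alpha> j)"

definition ncf_ar :: "real \<Rightarrow> nat \<Rightarrow> real" where
  "ncf_ar \<alpha> j = of_int (ncf_a \<alpha> j)"

definition ncf_tr :: "real \<Rightarrow> nat \<Rightarrow> real" where
  "ncf_tr \<alpha> j = of_int (ncf_t \<alpha> j)"

lemma ncf_qr_0 [simp]: "ncf_qr \<alpha> 0 = 0"
  and ncf_qr_1 [simp]: "ncf_qr \<alpha> (Suc 0) = 1"
  by (simp_all add: ncf_qr_def)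

lemma ncf_qr_rec: "ncf_qr \<alpha> (Suc (Suc j)) = ncf_ar \<alpha> (Suc j) * ncf_qr \<alpha> (Suc j) - ncf_qr \<alpha> j"
  by (simp add: ncf_qr_def ncf_ar_def)

lemma ncf_Dr_0 [simp]: "ncf_Dr \<alpha> 0 = 1"
  and ncf_Dr_1 [simp]: "ncf_Dr \<alpha> (Suc 0) = \<alpha>"
  by (simp_all add: ncf_Dr_def)

lemma ncf_Dr_rec: "ncf_Dr \<alpha> (Suc (Suc j)) = ncf_ar \<alpha> (Suc j) * ncf_Dr \<alpha> (Suc j) - ncf_Dr \<alpha> j"
  by (simp add: ncf_Dr_def ncf_ar_def algebra_simps)

lemma ncf_qr_Dr_det: "ncf_qr \<alpha> (Suc j) * ncf_Dr \<alpha> j - ncf_qr \<alpha> j * ncf_Dr \<alpha> (Suc j) = 1"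
  by (induction j) (simp_all add: ncf_qr_rec ncf_Dr_rec algebra_simps)

lemma ncf_D_eq_Dr: "ncf_D \<alpha> n = ncf_Dr \<alpha> (Suc n)"
  by (simp add: ncf_D_def ncf_Dr_def ncf_q_def ncf_p_def)

definition odd_count :: "real \<Rightarrow> nat \<Rightarrow> nat" where
  "odd_count \<alpha> j = card {k \<in> {1..j}. odd (ncf_a \<alpha> k)}"

lemma odd_count_0 [simp]: "odd_count \<alpha> 0 = 0"
  by (simp add: odd_count_def)

lemma odd_count_Suc:
  "odd_count \<alpha> (Suc j) = odd_count \<alpha> j + (if odd (ncf_a \<alpha> (Suc j)) then 1 else 0)"
proof -
  have "{k \<in> {1..Suc j}. odd (ncf_a \<alpha> k)} =
        (if odd (ncf_a \<alpha> (Suc j)) then insert (Suc j) {k \<in> {1..j}. odd (ncf_a \<alpha> k)}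
         else {k \<in> {1..j}. odd (ncf_a \<alpha> k)})"
    by (auto simp: le_Suc_eq)
  then show ?thesis by (simp add: odd_count_def)
qed

lemma ncf_tr_even: "even (ncf_a \<alpha> j) \<Longrightarrow> ncf_tr \<alpha> j = 0"
  by (simp add: ncf_tr_def ncf_t_def)

lemma ncf_tr_odd:
  assumes "odd (ncf_a \<alpha> (Suc j))"
  shows "ncf_tr \<alpha> (Suc j) = (-1) ^ odd_count \<alpha> j"
proof -
  have "ncf_t \<alpha> (Suc j) = (-1) ^ (odd_count \<alpha> (Suc j) + 1)"
    using assms by (simp add: ncf_t_def odd_count_def)
  then show ?thesis using assms by (simp add: ncf_tr_def odd_count_Suc)
qed

lemma abs_ncf_tr_le: "\<bar>ncf_tr \<alpha> j\<bar> \<le> 1"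
  by (simp add: ncf_tr_def ncf_t_def)

lemma ncf_t_odd_iff: "odd (ncf_t \<alpha> i) \<longleftrightarrow> odd (ncf_a \<alpha> i)"
  by (simp add: ncf_t_def)

text \<open>The step by which the partial sums \<open>\<Phi>\<close> and the tails \<open>E\<close> below keep their
  sign pattern and their bounds.\<close>

lemma abs_add_signed_half:
  fixes u c s :: real
  assumes "\<bar>u\<bar> \<le> c / 2" "s * u \<le> 0" "\<bar>s\<bar> = 1"
  shows "\<bar>u + s * c / 2\<bar> = c / 2 - \<bar>u\<bar>" and "s * (u + s * c / 2) \<ge> 0"
proof -
  consider "s = 1" | "s = -1" using assms(3) by linarith
  note cases = this
  show "\<bar>u + s * c / 2\<bar> = c / 2 - \<bar>u\<bar>" by (cases rule: cases) (use assms(1,2) in auto)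
  show "s * (u + s * c / 2) \<ge> 0" by (cases rule: cases) (use assms(1,2) in auto)
qed

definition ncf_Phi :: "real \<Rightarrow> nat \<Rightarrow> real" where
  "ncf_Phi \<alpha> j = -1/2 + (\<Sum>i=1..j. ncf_tr \<alpha> i * ncf_qr \<alpha> i / 2)"

lemma ncf_Phi_0 [simp]: "ncf_Phi \<alpha> 0 = -1/2"
  by (simp add: ncf_Phi_def)

lemma ncf_Phi_Suc: "ncf_Phi \<alpha> (Suc j) = ncf_Phi \<alpha> j + ncf_tr \<alpha> (Suc j) * ncf_qr \<alpha> (Suc j) / 2"
  by (simp add: ncf_Phi_def)

context ncf_irrational
begin

lemma ar_Suc_ge_two: "ncf_ar \<alpha> (Suc j) \<ge> 2"
  using a_Suc_ge_two by (simp add: ncf_ar_def)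

lemma Dr_Suc: "ncf_Dr \<alpha> (Suc j) = ncf_rem \<alpha> j * ncf_Dr \<alpha> j"
proof (induction j rule: nat_less_induct)
  case (1 j)
  show ?case
  proof (cases j)
    case 0
    then show ?thesis by simp
  next
    case (Suc i)
    have IH: "ncf_Dr \<alpha> (Suc i) = ncf_rem \<alpha> i * ncf_Dr \<alpha> i" using 1 Suc by simp
    have "ncf_Dr \<alpha> (Suc (Suc i)) = ncf_ar \<alpha> (Suc i) * ncf_Dr \<alpha> (Suc i) - ncf_Dr \<alpha> i"
      by (rule ncf_Dr_rec)
    also have "ncf_ar \<alpha> (Suc i) = ncf_rem \<alpha> (Suc i) + 1 / ncf_rem \<alpha> i"
      unfolding ncf_ar_def by (rule ncf_a_Suc_eq)
    finally show ?thesis using IH Suc rem_pos[of i] by (simp add: field_simps)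
  qed
qed

lemma Dr_pos: "ncf_Dr \<alpha> j > 0"
  by (induction j) (simp_all add: Dr_Suc rem_pos)

lemma Dr_Suc_less: "ncf_Dr \<alpha> (Suc j) < ncf_Dr \<alpha> j"
  using Dr_Suc[of j] rem_less_one[of j] Dr_pos[of j] by simp

lemma qr_Suc_ge: "ncf_qr \<alpha> (Suc j) \<ge> ncf_qr \<alpha> j + 1" and qr_nonneg: "ncf_qr \<alpha> j \<ge> 0"
proof -
  have "ncf_qr \<alpha> (Suc j) \<ge> ncf_qr \<alpha> j + 1 \<and> ncf_qr \<alpha> j \<ge> 0" for j
  proof (induction j)
    case 0
    then show ?case by simp
  next
    case (Suc j)
    have "ncf_ar \<alpha> (Suc j) * ncf_qr \<alpha> (Suc j) \<ge> 2 * ncf_qr \<alpha> (Suc j)"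
      using ar_Suc_ge_two[of j] Suc by (intro mult_right_mono) auto
    then show ?case using Suc ncf_qr_rec[of \<alpha> j] by linarith
  qed
  then show "ncf_qr \<alpha> (Suc j) \<ge> ncf_qr \<alpha> j + 1" "ncf_qr \<alpha> j \<ge> 0" by blast+
qed

lemma qr_Suc_ge_one: "ncf_qr \<alpha> (Suc j) \<ge> 1"
  using qr_Suc_ge[of j] qr_nonneg[of j] by linarith

lemma Phi_sign_bound:
  "(-1) ^ odd_count \<alpha> j * ncf_Phi \<alpha> j \<le> 0 \<and> \<bar>ncf_Phi \<alpha> j\<bar> \<le> ncf_qr \<alpha> (Suc j) / 2"
proof (induction j)
  case 0
  then show ?case by simp
next
  case (Suc j)
  let ?s = "(-1) ^ odd_count \<alpha> j :: real"
  have q: "ncf_qr \<alpha> (Suc j) \<le> ncf_qr \<alpha> (Suc (Suc j))" using qr_Suc_ge[of "Suc j"] by simp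
  show ?case
  proof (cases "odd (ncf_a \<alpha> (Suc j))")
    case True
    have "ncf_Phi \<alpha> (Suc j) = ncf_Phi \<alpha> j + ?s * ncf_qr \<alpha> (Suc j) / 2"
      using True by (simp add: ncf_Phi_Suc ncf_tr_odd)
    moreover note abs_add_signed_half[of "ncf_Phi \<alpha> j" "ncf_qr \<alpha> (Suc j)" ?s]
    ultimately show ?thesis using Suc True q by (simp add: odd_count_Suc)
  next
    case False
    then show ?thesis using Suc q by (simp add: ncf_Phi_Suc ncf_tr_even odd_count_Suc)
  qed
qed

lemma abs_Phi_Suc:
  "\<bar>ncf_Phi \<alpha> (Suc j)\<bar> =
     (if even (ncf_a \<alpha> (Suc j)) then \<bar>ncf_Phi \<alpha> j\<bar> else ncf_qr \<alpha> (Suc j) / 2 - \<bar>ncf_Phi \<alpha> j\<bar>)"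
  using Phi_sign_bound[of j]
    abs_add_signed_half(1)[of "ncf_Phi \<alpha> j" "ncf_qr \<alpha> (Suc j)" "(-1) ^ odd_count \<alpha> j"]
  by (simp add: ncf_Phi_Suc ncf_tr_odd ncf_tr_even)

lemma abs_Phi_le: "j \<ge> 1 \<Longrightarrow> \<bar>ncf_Phi \<alpha> j\<bar> \<le> ncf_qr \<alpha> j / 2"
  using abs_Phi_Suc[of "j - 1"] Phi_sign_bound[of "j - 1"] by (cases j) auto

end

definition ncf_E :: "real \<Rightarrow> nat \<Rightarrow> real" where
  "ncf_E \<alpha> j = (\<Sum>i. ncf_tr \<alpha> (i + Suc j) * ncf_Dr \<alpha> (i + Suc j) / 2)"

definition ncf_E_part :: "real \<Rightarrow> nat \<Rightarrow> nat \<Rightarrow> real" where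
  "ncf_E_part \<alpha> N j = (\<Sum>i<N. ncf_tr \<alpha> (i + Suc j) * ncf_Dr \<alpha> (i + Suc j) / 2)"

lemma ncf_E_part_Suc:
  "ncf_E_part \<alpha> (Suc N) j = ncf_E_part \<alpha> N (Suc j) + ncf_tr \<alpha> (Suc j) * ncf_Dr \<alpha> (Suc j) / 2"
  unfolding ncf_E_part_def by (subst sum.lessThan_Suc_shift) simp

lemma (in ncf_irrational) E_part_sign_bound:
  "(-1) ^ odd_count \<alpha> j * ncf_E_part \<alpha> N j \<ge> 0 \<and> \<bar>ncf_E_part \<alpha> N j\<bar> \<le> ncf_Dr \<alpha> (Suc j) / 2"
proof (induction N arbitrary: j)
  case 0
  then show ?case using Dr_pos[of "Suc j"] by (simp add: ncf_E_part_def)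
next
  case (Suc N)
  let ?s = "(-1) ^ odd_count \<alpha> j :: real"
  have D: "ncf_Dr \<alpha> (Suc (Suc j)) \<le> ncf_Dr \<alpha> (Suc j)" using Dr_Suc_less[of "Suc j"] by simp
  show ?case
  proof (cases "odd (ncf_a \<alpha> (Suc j))")
    case True
    have "ncf_E_part \<alpha> (Suc N) j = ncf_E_part \<alpha> N (Suc j) + ?s * ncf_Dr \<alpha> (Suc j) / 2"
      using True by (simp add: ncf_E_part_Suc ncf_tr_odd)
    moreover note abs_add_signed_half[of "ncf_E_part \<alpha> N (Suc j)" "ncf_Dr \<alpha> (Suc j)" ?s]
    ultimately show ?thesis using Suc.IH[of "Suc j"] True D by (simp add: odd_count_Suc)
  next
    case False
    then show ?thesis
      using Suc.IH[of "Suc j"] D by (simp add: ncf_E_part_Suc ncf_tr_even odd_count_Suc)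
  qed
qed

locale ncf_tail = ncf_irrational +
  fixes K :: nat and R :: int
  assumes R_ge_3: "R \<ge> 3" and a_ge_R: "\<And>i. i \<ge> K \<Longrightarrow> ncf_a \<alpha> i \<ge> R"
begin

lemma K_pos: "K \<ge> 1"
  using a_ge_R[of K] R_ge_3 by (cases K) auto

lemma ar_ge_3: "i \<ge> K \<Longrightarrow> ncf_ar \<alpha> i \<ge> 3"
  using a_ge_R[of i] R_ge_3 by (simp add: ncf_ar_def)

lemma rem_le_half: "Suc j \<ge> K \<Longrightarrow> ncf_rem \<alpha> j \<le> 1/2"
proof -
  assume "Suc j \<ge> K"
  then have "ncf_ar \<alpha> (Suc j) \<ge> 3" by (rule ar_ge_3)
  then have "ncf_ar \<alpha> (Suc j) - ncf_rem \<alpha> (Suc j) \<ge> 2"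
    using rem_less_one[of "Suc j"] by linarith
  then show ?thesis by (subst rem_eq) (simp add: ncf_ar_def[symmetric] field_simps)
qed

lemma rem_le_two_fifths: "j \<ge> K \<Longrightarrow> ncf_rem \<alpha> j \<le> 2/5"
proof -
  assume "j \<ge> K"
  then have "ncf_ar \<alpha> (Suc j) - ncf_rem \<alpha> (Suc j) \<ge> 5/2"
    using ar_ge_3[of "Suc j"] rem_le_half[of "Suc j"] by simp
  then show ?thesis by (subst rem_eq) (simp add: ncf_ar_def[symmetric] field_simps)
qed

lemma Dr_Suc_le_half: "j \<ge> K \<Longrightarrow> ncf_Dr \<alpha> (Suc j) \<le> ncf_Dr \<alpha> j / 2"
  using Dr_Suc[of j] rem_le_half[of j] Dr_pos[of j] by (simp add: mult_right_mono)

lemma Dr_summable: "summable (ncf_Dr \<alpha>)"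
proof (rule summable_ratio_test[of "1/2" K])
  fix n
  assume "n \<ge> K"
  then show "norm (ncf_Dr \<alpha> (Suc n)) \<le> 1/2 * norm (ncf_Dr \<alpha> n)"
    using Dr_Suc_le_half[of n] Dr_pos[of n] Dr_pos[of "Suc n"] by simp
qed simp

lemma summable_E_terms: "summable (\<lambda>i. ncf_tr \<alpha> (i + k) * ncf_Dr \<alpha> (i + k) / 2)"
proof (rule summable_comparison_test')
  show "summable (\<lambda>i. ncf_Dr \<alpha> (i + k))"
    using Dr_summable summable_iff_shift by blast
  show "norm (ncf_tr \<alpha> (i + k) * ncf_Dr \<alpha> (i + k) / 2) \<le> ncf_Dr \<alpha> (i + k)" for i
    using abs_ncf_tr_le[of \<alpha> "i + k"] Dr_pos[of "i + k"]
    by (simp add: abs_mult mult_le_cancel_right1)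
qed

lemma E_part_tendsto: "(\<lambda>N. ncf_E_part \<alpha> N j) \<longlonglongrightarrow> ncf_E \<alpha> j"
  unfolding ncf_E_part_def ncf_E_def using summable_E_terms summable_LIMSEQ by blast

lemma E_rec: "ncf_E \<alpha> j = ncf_E \<alpha> (Suc j) + ncf_tr \<alpha> (Suc j) * ncf_Dr \<alpha> (Suc j) / 2"
  using suminf_split_head[OF summable_E_terms[of "Suc j"]] by (simp add: ncf_E_def)

lemma E_sign_bound:
  "(-1) ^ odd_count \<alpha> j * ncf_E \<alpha> j \<ge> 0 \<and> \<bar>ncf_E \<alpha> j\<bar> \<le> ncf_Dr \<alpha> (Suc j) / 2"
proof
  have "(\<lambda>N. (-1) ^ odd_count \<alpha> j * ncf_E_part \<alpha> N j) \<longlonglongrightarrow> (-1) ^ odd_count \<alpha> j * ncf_E \<alpha> j"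
    by (intro tendsto_intros E_part_tendsto)
  then show "(-1) ^ odd_count \<alpha> j * ncf_E \<alpha> j \<ge> 0"
    by (rule LIMSEQ_le_const) (use E_part_sign_bound in fast)
  have "(\<lambda>N. \<bar>ncf_E_part \<alpha> N j\<bar>) \<longlonglongrightarrow> \<bar>ncf_E \<alpha> j\<bar>"
    by (intro tendsto_intros E_part_tendsto)
  then show "\<bar>ncf_E \<alpha> j\<bar> \<le> ncf_Dr \<alpha> (Suc j) / 2"
    by (rule LIMSEQ_le_const2) (use E_part_sign_bound in fast)
qed

lemma abs_E_eq:
  "\<bar>ncf_E \<alpha> j\<bar> =
     (if even (ncf_a \<alpha> (Suc j)) then \<bar>ncf_E \<alpha> (Suc j)\<bar> else ncf_Dr \<alpha> (Suc j) / 2 - \<bar>ncf_E \<alpha> (Suc j)\<bar>)"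
proof (cases "even (ncf_a \<alpha> (Suc j))")
  case True
  then show ?thesis by (simp add: E_rec[of j] ncf_tr_even)
next
  case False
  let ?s = "(-1) ^ odd_count \<alpha> j :: real"
  have "\<bar>ncf_E \<alpha> (Suc j)\<bar> \<le> ncf_Dr \<alpha> (Suc j) / 2"
    using E_sign_bound[of "Suc j"] Dr_Suc_less[of "Suc j"] by linarith
  moreover have "?s * ncf_E \<alpha> (Suc j) \<le> 0"
    using E_sign_bound[of "Suc j"] False by (simp add: odd_count_Suc)
  ultimately show ?thesis
    using False abs_add_signed_half(1)[of "ncf_E \<alpha> (Suc j)" "ncf_Dr \<alpha> (Suc j)" ?s]
    by (simp add: E_rec[of j] ncf_tr_odd)
qed

lemma Phi_E_nonpos: "ncf_Phi \<alpha> j * ncf_E \<alpha> j \<le> 0"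
proof -
  let ?s = "(-1) ^ odd_count \<alpha> j :: real"
  have "(?s * ncf_Phi \<alpha> j) * (?s * ncf_E \<alpha> j) \<le> 0"
    using Phi_sign_bound[of j] E_sign_bound[of j] by (simp add: mult_nonpos_nonneg)
  then show ?thesis by (simp add: algebra_simps)
qed

text \<open>The series defining \<open>\<gamma>\<^sup>*\<close> splits into a telescoping part, which sums to
  \<open>(1 - \<alpha>) / 2\<close> because \<open>(a\<^sub>i - 2) D\<^sub>i\<^sub>-\<^sub>1 = D\<^sub>i + D\<^sub>i\<^sub>-\<^sub>2 - 2 D\<^sub>i\<^sub>-\<^sub>1\<close>, and the
  \<open>t\<close>-part, which is \<open>E\<^sub>0\<close>.\<close>

lemma gamma_star_eq: "gamma_star \<alpha> = (1 - \<alpha>) / 2 + ncf_E \<alpha> 0"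
proof -
  define S where "S = suminf (ncf_Dr \<alpha>)"
  have s0: "ncf_Dr \<alpha> sums S" using Dr_summable S_def summable_sums by blast
  have s1: "(\<lambda>i. ncf_Dr \<alpha> (Suc i)) sums (S - 1)"
    using sums_Suc_iff[of "ncf_Dr \<alpha>" "S - 1"] s0 by simp
  have s2: "(\<lambda>i. ncf_Dr \<alpha> (Suc (Suc i))) sums (S - 1 - \<alpha>)"
    using sums_Suc_iff[of "\<lambda>i. ncf_Dr \<alpha> (Suc i)" "S - 1 - \<alpha>"] s1 by simp
  have "(\<lambda>i. (ncf_Dr \<alpha> (Suc (Suc i)) + ncf_Dr \<alpha> i - 2 * ncf_Dr \<alpha> (Suc i)) / 2)
      sums (((S - 1 - \<alpha>) + S - 2 * (S - 1)) / 2)"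
    by (intro sums_divide sums_diff sums_add sums_mult s0 s1 s2)
  moreover have "(\<lambda>i. (ncf_Dr \<alpha> (Suc (Suc i)) + ncf_Dr \<alpha> i - 2 * ncf_Dr \<alpha> (Suc i)) / 2) =
      (\<lambda>i. (ncf_ar \<alpha> (Suc i) - 2) / 2 * ncf_Dr \<alpha> (Suc i))"
    by (simp add: ncf_Dr_rec algebra_simps)
  ultimately have telescoping:
    "(\<lambda>i. (ncf_ar \<alpha> (Suc i) - 2) / 2 * ncf_Dr \<alpha> (Suc i)) sums ((1 - \<alpha>) / 2)"
    by simp
  have "(\<lambda>i. ncf_tr \<alpha> (i + Suc 0) * ncf_Dr \<alpha> (i + Suc 0) / 2) sums ncf_E \<alpha> 0"
    unfolding ncf_E_def using summable_E_terms summable_sums by blast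
  from sums_add[OF telescoping this] show ?thesis
    unfolding gamma_star_def
    by (simp add: sums_iff ncf_ar_def ncf_tr_def ncf_D_eq_Dr add_divide_distrib distrib_right)
qed

end

section \<open>Coordinates of a lattice point\<close>

text \<open>\<open>(w\<^sub>j, w\<^sub>j\<^sub>+\<^sub>1)\<close> are the coordinates of \<open>(n - \<Phi>\<^sub>j, m - n\<alpha> + \<gamma>\<^sup>* - E\<^sub>j)\<close> with
  respect to the unimodular basis of consecutive convergents.\<close>

fun ncf_w2 :: "real \<Rightarrow> int \<Rightarrow> int \<Rightarrow> nat \<Rightarrow> int" where
  "ncf_w2 \<alpha> n m 0 = 2 * n + 1"
| "ncf_w2 \<alpha> n m (Suc 0) = 2 * m + 1"
| "ncf_w2 \<alpha> n m (Suc (Suc j)) =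
     ncf_a \<alpha> (Suc j) * ncf_w2 \<alpha> n m (Suc j) - ncf_w2 \<alpha> n m j + ncf_t \<alpha> (Suc j)"

definition ncf_w :: "real \<Rightarrow> int \<Rightarrow> int \<Rightarrow> nat \<Rightarrow> real" where
  "ncf_w \<alpha> n m j = of_int (ncf_w2 \<alpha> n m j) / 2"

lemma ncf_w_rec:
  "ncf_w \<alpha> n m (Suc (Suc j)) =
     ncf_ar \<alpha> (Suc j) * ncf_w \<alpha> n m (Suc j) - ncf_w \<alpha> n m j + ncf_tr \<alpha> (Suc j) / 2"
  by (simp add: ncf_w_def ncf_ar_def ncf_tr_def field_simps)

lemma odd_ncf_w2: "odd (ncf_w2 \<alpha> n m j)"
  by (induction \<alpha> n m j rule: ncf_w2.induct) (auto simp: ncf_t_odd_iff)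

lemma abs_ncf_w_ge_half: "\<bar>ncf_w \<alpha> n m j\<bar> \<ge> 1/2"
proof -
  have "ncf_w2 \<alpha> n m j \<noteq> 0" using odd_ncf_w2[of \<alpha> n m j] by auto
  then have "\<bar>real_of_int (ncf_w2 \<alpha> n m j)\<bar> \<ge> 1" by linarith
  then show ?thesis by (simp add: ncf_w_def)
qed

lemma ncf_w_not_strictly_decreasing:
  obtains k where "\<bar>ncf_w \<alpha> n m (J + Suc k)\<bar> \<ge> \<bar>ncf_w \<alpha> n m (J + k)\<bar>"
proof -
  obtain k where "\<not> nat \<bar>ncf_w2 \<alpha> n m (J + Suc k)\<bar> < nat \<bar>ncf_w2 \<alpha> n m (J + k)\<bar>"
    using wf_no_infinite_down_chainE[OF wf_less, of "\<lambda>k. nat \<bar>ncf_w2 \<alpha> n m (J + k)\<bar>"] by auto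
  then have "\<bar>ncf_w2 \<alpha> n m (J + Suc k)\<bar> \<ge> \<bar>ncf_w2 \<alpha> n m (J + k)\<bar>" by linarith
  then show thesis by (intro that[of k]) (simp add: ncf_w_def)
qed

lemma (in ncf_irrational) n_eq:
  "of_int n = ncf_qr \<alpha> (Suc j) * ncf_w \<alpha> n m j - ncf_qr \<alpha> j * ncf_w \<alpha> n m (Suc j) + ncf_Phi \<alpha> j"
proof (induction j)
  case 0
  then show ?case by (simp add: ncf_w_def field_simps)
next
  case (Suc j)
  then show ?case by (simp add: ncf_qr_rec ncf_w_rec ncf_Phi_Suc algebra_simps)
qed

lemma (in ncf_tail) distance_eq:
  "of_int m - \<alpha> * of_int n + gamma_star \<alpha> =
     ncf_Dr \<alpha> j * ncf_w \<alpha> n m (Suc j) - ncf_Dr \<alpha> (Suc j) * ncf_w \<alpha> n m j + ncf_E \<alpha> j"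
proof (induction j)
  case 0
  then show ?case by (simp add: ncf_w_def gamma_star_eq field_simps)
next
  case (Suc j)
  then show ?case using E_rec[of j] by (simp add: ncf_Dr_rec ncf_w_rec algebra_simps)
qed

section \<open>The quadratic form in two consecutive coordinates\<close>

definition coord_prod :: "real \<Rightarrow> real \<Rightarrow> real \<Rightarrow> real \<Rightarrow> real \<Rightarrow> real \<Rightarrow> real \<Rightarrow> real \<Rightarrow> real" where
  "coord_prod q0 q1 d0 d1 \<phi> e x y = (q1 * x - q0 * y + \<phi>) * (d0 * y - d1 * x + e)"

lemma (in ncf_tail) product_eq_coord_prod:
  "of_int n * (of_int m - \<alpha> * of_int n + gamma_star \<alpha>) =
     coord_prod (ncf_qr \<alpha> j) (ncf_qr \<alpha> (Suc j)) (ncf_Dr \<alpha> j) (ncf_Dr \<alpha> (Suc j))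
       (ncf_Phi \<alpha> j) (ncf_E \<alpha> j) (ncf_w \<alpha> n m j) (ncf_w \<alpha> n m (Suc j))"
  unfolding coord_prod_def by (subst n_eq[of n j m], subst distance_eq[of m n j]) (rule refl)

lemma coord_prod_neg: "coord_prod q0 q1 d0 d1 (-\<phi>) (-e) (-x) (-y) = coord_prod q0 q1 d0 d1 \<phi> e x y"
  unfolding coord_prod_def by (simp add: algebra_simps)

lemma coord_prod_shift:
  assumes "q2 = a * q1 - q0" "d2 = a * d1 - d0" "\<phi>1 = \<phi>0 + t * q1 / 2" "e0 = e1 + t * d1 / 2"
  shows "coord_prod q0 q1 d0 d1 \<phi>0 e0 x y = coord_prod q1 q2 d1 d2 \<phi>1 e1 y (a * y - x + t / 2)"
  unfolding coord_prod_def assms by (simp add: algebra_simps)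

lemma coord_prod_opposite_signs_aux:
  fixes q0 q1 d0 d1 \<phi> e x y :: real
  assumes "0 \<le> q0" "0 \<le> q1" "0 \<le> d0" "0 \<le> d1" "q1 * d0 - q0 * d1 = 1"
    and "\<bar>\<phi>\<bar> \<le> q0 / 2" "\<bar>e\<bar> \<le> d1 / 2" and "x \<ge> 1/2" "y \<le> -1/2"
  shows "coord_prod q0 q1 d0 d1 \<phi> e x y \<le> -1/4"
proof -
  have "q1 * x \<ge> q1 * (1/2)" "q0 * (-y) \<ge> q0 * (1/2)" "d0 * (-y) \<ge> d0 * (1/2)" "d1 * x \<ge> d1 * (1/2)"
    using assms by (intro mult_left_mono; simp)+
  then have "q1 / 2 \<le> q1 * x - q0 * y + \<phi>" "d0 / 2 \<le> -(d0 * y - d1 * x + e)"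
    using assms(6,7) by (auto simp: abs_le_iff)
  then have "(q1 / 2) * (d0 / 2) \<le> (q1 * x - q0 * y + \<phi>) * -(d0 * y - d1 * x + e)"
    using assms(2,3) by (intro mult_mono) auto
  moreover have "q1 * d0 \<ge> 1" using assms(1,4,5) mult_nonneg_nonneg[of q0 d1] by linarith
  ultimately have "coord_prod q0 q1 d0 d1 \<phi> e x y * -1 \<ge> 1/4"
    unfolding coord_prod_def by (simp only: mult_minus_right)
  then show ?thesis by simp
qed

lemma coord_prod_opposite_signs:
  fixes q0 q1 d0 d1 \<phi> e x y :: real
  assumes "0 \<le> q0" "0 \<le> q1" "0 \<le> d0" "0 \<le> d1" "q1 * d0 - q0 * d1 = 1"
    and "\<bar>\<phi>\<bar> \<le> q0 / 2" "\<bar>e\<bar> \<le> d1 / 2" and "\<bar>x\<bar> \<ge> 1/2" "\<bar>y\<bar> \<ge> 1/2" "x * y < 0"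
  shows "\<bar>coord_prod q0 q1 d0 d1 \<phi> e x y\<bar> \<ge> 1/4"
proof (cases "x > 0")
  case True
  then have "y < 0" using assms(10) by (simp add: mult_less_0_iff)
  then show ?thesis
    using coord_prod_opposite_signs_aux[OF assms(1-7), of x y] assms(8,9) True by auto
next
  case False
  then have "x < 0" "y > 0" using assms(8,10) by (auto simp: mult_less_0_iff)
  then show ?thesis
    using coord_prod_opposite_signs_aux[OF assms(1-5), of "-\<phi>" "-e" "-x" "-y"] assms(6-9)
    by (auto simp: coord_prod_neg)
qed

lemma concave_quadratic_ge_min:
  fixes p r c u l h x :: real
  assumes "p \<ge> 0" "r \<ge> 0" "l \<le> x" "x \<le> h"
  shows "(p * x + c) * (u - r * x) \<ge> min ((p * l + c) * (u - r * l)) ((p * h + c) * (u - r * h))"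
proof (cases "l = h")
  case True
  then show ?thesis using assms by auto
next
  case False
  then have hl: "h - l > 0" using assms by simp
  define f where "f z = (p * z + c) * (u - r * z)" for z
  have "(h - l) * f x - (h - x) * f l - (x - l) * f h = p * r * (x - l) * (h - x) * (h - l)"
    unfolding f_def by (simp add: algebra_simps)
  moreover have "p * r * (x - l) * (h - x) * (h - l) \<ge> 0" using assms hl by simp
  moreover have "(h - x) * f l + (x - l) * f h \<ge> (h - x) * min (f l) (f h) + (x - l) * min (f l) (f h)"
    using assms by (intro add_mono mult_left_mono) auto
  ultimately have "(h - l) * f x \<ge> (h - l) * min (f l) (f h)" by (simp add: algebra_simps)
  then show ?thesis using hl unfolding f_def by simp
qed

lemma coord_prod_diag_ge:
  assumes "y \<ge> 1/2" "q0 \<le> q1" "d1 \<le> d0" "0 \<le> q1 - q0 + 2 * \<phi>" "0 \<le> d0 - d1 + 2 * e"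
  shows "coord_prod q0 q1 d0 d1 \<phi> e y y \<ge> coord_prod q0 q1 d0 d1 \<phi> e (1/2) (1/2)"
proof -
  have "(q1 - q0) * (1/2) \<le> (q1 - q0) * y" "(d0 - d1) * (1/2) \<le> (d0 - d1) * y"
    using assms(1-3) by (intro mult_left_mono; simp)+
  then have "((q1 - q0) * (1/2) + \<phi>) * ((d0 - d1) * (1/2) + e) \<le> ((q1 - q0) * y + \<phi>) * ((d0 - d1) * y + e)"
    using assms(4,5) by (intro mult_mono) argo+
  moreover have "coord_prod q0 q1 d0 d1 \<phi> e y y = ((q1 - q0) * y + \<phi>) * ((d0 - d1) * y + e)"
    by (simp add: coord_prod_def algebra_simps)
  moreover have "coord_prod q0 q1 d0 d1 \<phi> e (1/2) (1/2) = ((q1 - q0) * (1/2) + \<phi>) * ((d0 - d1) * (1/2) + e)"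
    by (simp add: coord_prod_def field_simps)
  ultimately show ?thesis by simp
qed

text \<open>The form is concave in \<open>x\<close>; for \<open>y \<le> x \<le> h\<close>, with \<open>h\<close> the value of \<open>x\<close> making the
  next coordinate equal to \<open>y\<close>, its values at the two ends are diagonal values of the
  two consecutive forms, and these grow with \<open>y \<ge> 1/2\<close>.\<close>

lemma coord_prod_valley:
  assumes rec: "q2 = a * q1 - q0" "d2 = a * d1 - d0" "\<phi>1 = \<phi>0 + t * q1 / 2" "e0 = e1 + t * d1 / 2"
    and growth: "0 \<le> q0" "2 * q0 \<le> q1" "2 * q1 \<le> q2" "0 \<le> d2" "2 * d2 \<le> d1" "2 * d1 \<le> d0"
    and bounds: "\<bar>\<phi>0\<bar> \<le> q0 / 2" "\<bar>\<phi>1\<bar> \<le> q1 / 2" "\<bar>e0\<bar> \<le> d1 / 2" "\<bar>e1\<bar> \<le> d2 / 2"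
    and valley: "y \<ge> 1/2" "x \<ge> y" "a * y - x + t / 2 \<ge> y"
  shows "coord_prod q0 q1 d0 d1 \<phi>0 e0 x y \<ge>
    min (coord_prod q0 q1 d0 d1 \<phi>0 e0 (1/2) (1/2)) (coord_prod q1 q2 d1 d2 \<phi>1 e1 (1/2) (1/2))"
proof -
  have half_bounds: "-q0 \<le> 2 * \<phi>0" "-q1 \<le> 2 * \<phi>1" "-d1 \<le> 2 * e0" "-d2 \<le> 2 * e1"
    using bounds by (auto simp: abs_le_iff)
  define h where "h = (a - 1) * y + t / 2"
  have "(q1 * x + (\<phi>0 - q0 * y)) * ((d0 * y + e0) - d1 * x) \<ge>
     min ((q1 * y + (\<phi>0 - q0 * y)) * ((d0 * y + e0) - d1 * y))
         ((q1 * h + (\<phi>0 - q0 * y)) * ((d0 * y + e0) - d1 * h))"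
    using growth valley by (intro concave_quadratic_ge_min) (auto simp: h_def algebra_simps)
  then have "coord_prod q0 q1 d0 d1 \<phi>0 e0 x y \<ge>
      min (coord_prod q0 q1 d0 d1 \<phi>0 e0 y y) (coord_prod q0 q1 d0 d1 \<phi>0 e0 h y)"
    by (simp add: coord_prod_def algebra_simps)
  moreover have "coord_prod q0 q1 d0 d1 \<phi>0 e0 h y = coord_prod q1 q2 d1 d2 \<phi>1 e1 y y"
    using coord_prod_shift[OF rec, of h y] by (simp add: h_def algebra_simps)
  moreover have "coord_prod q0 q1 d0 d1 \<phi>0 e0 y y \<ge> coord_prod q0 q1 d0 d1 \<phi>0 e0 (1/2) (1/2)"
    using growth half_bounds valley by (intro coord_prod_diag_ge) linarith+
  moreover have "coord_prod q1 q2 d1 d2 \<phi>1 e1 y y \<ge> coord_prod q1 q2 d1 d2 \<phi>1 e1 (1/2) (1/2)"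
    using growth half_bounds valley by (intro coord_prod_diag_ge) linarith+
  ultimately show ?thesis by linarith
qed

lemma coord_prod_valley_bound:
  assumes rec: "q2 = a * q1 - q0" "d2 = a * d1 - d0" "\<phi>1 = \<phi>0 + t * q1 / 2" "e0 = e1 + t * d1 / 2"
    and growth: "0 \<le> q0" "2 * q0 \<le> q1" "2 * q1 \<le> q2" "0 \<le> d2" "2 * d2 \<le> d1" "2 * d1 \<le> d0"
    and bounds: "\<bar>\<phi>0\<bar> \<le> q0 / 2" "\<bar>\<phi>1\<bar> \<le> q1 / 2" "\<bar>e0\<bar> \<le> d1 / 2" "\<bar>e1\<bar> \<le> d2 / 2"
    and det: "q1 * d0 - q0 * d1 = 1"
    and z: "z = a * y - x + t / 2"
    and coords: "\<bar>x\<bar> \<ge> 1/2" "\<bar>y\<bar> \<ge> 1/2" "\<bar>z\<bar> \<ge> 1/2" "\<bar>y\<bar> \<le> \<bar>x\<bar>" "\<bar>y\<bar> \<le> \<bar>z\<bar>"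
    and B: "B \<le> 1/4"
      "\<And>s. \<bar>s\<bar> = 1 \<Longrightarrow> B \<le> coord_prod q0 q1 d0 d1 (s * \<phi>0) (s * e0) (1/2) (1/2)"
      "\<And>s. \<bar>s\<bar> = 1 \<Longrightarrow> B \<le> coord_prod q1 q2 d1 d2 (s * \<phi>1) (s * e1) (1/2) (1/2)"
  shows "B \<le> \<bar>coord_prod q0 q1 d0 d1 \<phi>0 e0 x y\<bar>"
proof -
  have shift: "coord_prod q0 q1 d0 d1 \<phi>0 e0 x y = coord_prod q1 q2 d1 d2 \<phi>1 e1 y z"
    using coord_prod_shift[OF rec] z by simp
  have "q2 * d1 - q1 * d2 = q1 * d0 - q0 * d1" unfolding rec(1,2) by (simp add: algebra_simps)
  then have det': "q2 * d1 - q1 * d2 = 1" using det by simp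
  consider "x * y < 0" | "y * z < 0" | "y > 0" "x > 0" "z > 0" | "y < 0" "x < 0" "z < 0"
    using coords(1-3) by (cases "x > 0"; cases "y > 0"; cases "z > 0") (auto simp: mult_less_0_iff)
  then show ?thesis
  proof cases
    case 1
    then show ?thesis using coord_prod_opposite_signs[OF _ _ _ _ det, of \<phi>0 e0 x y] growth bounds
      coords B(1) by auto
  next
    case 2
    then show ?thesis using coord_prod_opposite_signs[OF _ _ _ _ det', of \<phi>1 e1 y z] growth bounds
      coords B(1) shift by auto
  next
    case 3
    then have "min (coord_prod q0 q1 d0 d1 \<phi>0 e0 (1/2) (1/2)) (coord_prod q1 q2 d1 d2 \<phi>1 e1 (1/2) (1/2))
        \<le> coord_prod q0 q1 d0 d1 \<phi>0 e0 x y"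
      using coords z by (intro coord_prod_valley[OF rec growth bounds]) auto
    then show ?thesis using B(2,3)[of 1] by simp
  next
    case 4
    have "min (coord_prod q0 q1 d0 d1 (-\<phi>0) (-e0) (1/2) (1/2)) (coord_prod q1 q2 d1 d2 (-\<phi>1) (-e1) (1/2) (1/2))
        \<le> coord_prod q0 q1 d0 d1 (-\<phi>0) (-e0) (-x) (-y)"
    proof (rule coord_prod_valley[OF rec(1,2) _ _ growth])
      show "-\<phi>1 = -\<phi>0 + (-t) * q1 / 2" "-e0 = -e1 + (-t) * d1 / 2" using rec(3,4) by simp_all
    qed (use bounds coords z 4 in auto)
    then show ?thesis using B(2,3)[of "-1"] by (simp add: coord_prod_neg)
  qed
qed

section \<open>The contraction constants\<close>

lemma small_root_props:
  fixes M :: real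
  assumes "M \<ge> 4"
  defines "b \<equiv> (M - sqrt (M\<^sup>2 - 4)) / 2"
  shows "0 < b" "b < 1/3" "b * (M - b) = 1"
proof -
  have "4 * 4 \<le> M * M" using assms(1) by (intro mult_mono) auto
  then have "M\<^sup>2 - 4 \<ge> 0" by (simp add: power2_eq_square)
  then have ss: "sqrt (M\<^sup>2 - 4) * sqrt (M\<^sup>2 - 4) = M\<^sup>2 - 4" by simp
  have "sqrt (M\<^sup>2 - 4) < sqrt (M\<^sup>2)" by (intro real_sqrt_less_mono) simp
  then show "0 < b" using assms by (simp add: b_def)
  have "(M - 2/3)\<^sup>2 < M\<^sup>2 - 4" using assms(1) by (simp add: power2_eq_square algebra_simps)
  then have "M - 2/3 < sqrt (M\<^sup>2 - 4)" by (rule real_less_rsqrt)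
  then show "b < 1/3" by (simp add: b_def)
  have "b * (M - b) = (M * M - sqrt (M\<^sup>2 - 4) * sqrt (M\<^sup>2 - 4)) / 4"
    by (simp add: b_def field_simps)
  then show "b * (M - b) = 1" using ss by (simp add: power2_eq_square)
qed

lemma beta_delta_even:
  fixes R :: int
  assumes "R \<ge> 3" "even R"
  shows "R \<ge> 4" "0 < beta_R R" "beta_R R < 1/3" "beta_R R * (R - beta_R R) = 1"
    "delta_R R * (R + 1 - beta_R R) = 1" "0 < delta_R R" "delta_R R \<le> 2/5"
proof -
  show R4: "R \<ge> 4" using assms by presburger
  have "beta_R R = (real_of_int R - sqrt ((real_of_int R)\<^sup>2 - 4)) / 2"
    using assms by (simp add: beta_R_def)
  note \<beta> = small_root_props[of "real_of_int R", folded this]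
  show "0 < beta_R R" "beta_R R < 1/3" "beta_R R * (R - beta_R R) = 1" using \<beta> R4 by auto
  have \<delta>: "delta_R R = 1 / (R + 1 - beta_R R)" using assms by (simp add: delta_R_def)
  have pos: "R + 1 - beta_R R \<ge> 14/3" using \<beta> R4 by linarith
  then show eq: "delta_R R * (R + 1 - beta_R R) = 1" and "0 < delta_R R" using \<delta> by simp_all
  have "delta_R R * (14/3) \<le> delta_R R * (R + 1 - beta_R R)"
    using pos \<delta> by (intro mult_left_mono) auto
  then show "delta_R R \<le> 2/5" using eq by linarith
qed

lemma beta_delta_odd:
  fixes R :: int
  assumes "R \<ge> 3" "odd R"
  shows "0 < beta_R R" "beta_R R < 1/3" "beta_R R * (R + 1 - beta_R R) = 1"
    "delta_R R * (R - beta_R R) = 1" "0 < delta_R R" "delta_R R \<le> 2/5"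
proof -
  have "beta_R R = (real_of_int R + 1 - sqrt ((real_of_int R + 1)\<^sup>2 - 4)) / 2"
    using assms by (simp add: beta_R_def)
  note \<beta> = small_root_props[of "real_of_int R + 1", folded this]
  show "0 < beta_R R" "beta_R R < 1/3" "beta_R R * (R + 1 - beta_R R) = 1" using \<beta> assms by auto
  have \<delta>: "delta_R R = 1 / (R - beta_R R)" using assms by (simp add: delta_R_def)
  have pos: "R - beta_R R \<ge> 8/3" using \<beta> assms by linarith
  then show eq: "delta_R R * (R - beta_R R) = 1" and "0 < delta_R R" using \<delta> by simp_all
  have "delta_R R * (8/3) \<le> delta_R R * (R - beta_R R)"
    using pos \<delta> by (intro mult_left_mono) auto
  then show "delta_R R \<le> 2/5" using eq by linarith
qed

lemma beta_delta_bounds: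
  fixes R :: int
  assumes "R \<ge> 3"
  shows "0 < beta_R R" "beta_R R \<le> 2/5" "0 < delta_R R" "delta_R R \<le> 2/5"
  using beta_delta_even[OF assms] beta_delta_odd[OF assms] by (cases "even R"; simp)+

text \<open>The pairs \<open>(x, r)\<close> of interest are \<open>(q\<^sub>j\<^sub>-\<^sub>1 / q\<^sub>j, |\<Phi>\<^sub>j| / q\<^sub>j)\<close> and
  \<open>(D\<^sub>j / D\<^sub>j\<^sub>-\<^sub>1, |E\<^sub>j| / D\<^sub>j\<^sub>-\<^sub>1)\<close>. Both are transformed by
  \<open>(x, r) \<mapsto> (1, \<rho>) / (a - x)\<close> with \<open>\<rho> = r\<close> or \<open>\<rho> = 1/2 - r\<close> according to the parity of
  the partial quotient \<open>a\<close>, and for \<open>a \<ge> R\<close> this map halves the excess \<open>\<eta>\<close> of the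
  following region over its limit, which is described by \<open>\<beta>\<close> and \<open>\<delta>\<close>.\<close>

definition ratio_region :: "int \<Rightarrow> real \<Rightarrow> real \<Rightarrow> real \<Rightarrow> bool" where
  "ratio_region R \<eta> x r \<longleftrightarrow> 0 < x \<and> x \<le> 2/5 \<and> 0 \<le> r \<and> r \<le> x / 2
     \<and> x - 2 * r \<le> beta_R R + \<eta> \<and> x / 2 + r \<le> delta_R R + \<eta> \<and> (even R \<longrightarrow> x \<le> beta_R R + \<eta>)"

lemma ratio_region_one:
  assumes "R \<ge> 3" "0 < x" "x \<le> 2/5" "0 \<le> r" "r \<le> x / 2"
  shows "ratio_region R 1 x r"
  using assms beta_delta_bounds[OF assms(1)] unfolding ratio_region_def by auto

lemma ratio_step_box:
  fixes a :: int and x r :: real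
  assumes "a \<ge> 3" "0 \<le> x" "x \<le> 1/2" "0 \<le> r" "r \<le> 1/2"
  defines "\<rho> \<equiv> if even a then r else 1/2 - r"
  shows "0 < 1 / (a - x)" "1 / (a - x) \<le> 2/5" "0 \<le> \<rho> / (a - x)" "\<rho> / (a - x) \<le> 1 / (a - x) / 2"
proof -
  have D: "a - x \<ge> 5/2" using assms(1,3) by simp
  have \<rho>: "0 \<le> \<rho>" "\<rho> \<le> 1/2" using assms(4,5) by (auto simp: \<rho>_def)
  then show "0 < 1 / (a - x)" "1 / (a - x) \<le> 2/5" "0 \<le> \<rho> / (a - x)" using D by (auto simp: field_simps)
  have "\<rho> / (a - x) \<le> (1/2) / (a - x)" using D \<rho> by (intro divide_right_mono) auto
  also have "(1/2) / (a - x) = 1 / (a - x) / 2" using D by (simp add: field_simps)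
  finally show "\<rho> / (a - x) \<le> 1 / (a - x) / 2" .
qed

lemma contract_x_even:
  fixes R a :: int and \<beta> x \<eta> :: real
  assumes "R \<ge> 4" "a \<ge> R" "\<beta> * (R - \<beta>) = 1" "0 < \<beta>" "\<beta> < 1/3" "x \<le> \<beta> + \<eta>" "0 \<le> \<eta>" "\<eta> \<le> 1"
  shows "1 \<le> (\<beta> + \<eta> / 2) * (a - x)"
proof -
  have "(\<beta> + \<eta> / 2) * (R - \<beta> - \<eta>) \<le> (\<beta> + \<eta> / 2) * (a - x)"
    using assms by (intro mult_left_mono) auto
  moreover have "(\<beta> + \<eta> / 2) * (R - \<beta> - \<eta>) = 1 + \<eta> * (R / 2 - 3 * \<beta> / 2 - \<eta> / 2)"
    using assms(3) by (simp add: algebra_simps)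
  moreover have "\<eta> * (R / 2 - 3 * \<beta> / 2 - \<eta> / 2) \<ge> 0" using assms by (intro mult_nonneg_nonneg) auto
  ultimately show ?thesis by linarith
qed

lemma contract_diff_even:
  fixes R a :: int and \<beta> x r \<eta> :: real
  assumes "R \<ge> 4" "even R" "a \<ge> R" "\<beta> * (R - \<beta>) = 1" "0 < \<beta>" "\<beta> < 1/3"
    and "0 \<le> x" "x \<le> 2/5" "0 \<le> r" "r \<le> x / 2" "x \<le> \<beta> + \<eta>" "0 \<le> \<eta>" "\<eta> \<le> 1"
  shows "1 - 2 * (if even a then r else 1/2 - r) \<le> (\<beta> + \<eta> / 2) * (a - x)"
proof (cases "even a")
  case True
  then show ?thesis using contract_x_even[of R a \<beta> x \<eta>] assms by simp
next
  case False
  then have "a \<ge> R + 1" using assms(2,3) by (cases "a = R") auto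
  moreover have "(real_of_int R + 1) * x \<le> (real_of_int R + 1) * 1"
    using assms(1,8) by (intro mult_left_mono) auto
  ultimately have "R * x \<le> a - x" by (simp add: algebra_simps)
  then have "\<beta> * (R * x) \<le> \<beta> * (a - x)" using assms(5) by (intro mult_left_mono) auto
  moreover have "\<beta> * R = 1 + \<beta> * \<beta>" using assms(4) by (simp add: algebra_simps)
  then have "1 * x \<le> (\<beta> * R) * x" using assms(7) by (intro mult_right_mono) auto
  moreover have "\<beta> * (a - x) \<le> (\<beta> + \<eta> / 2) * (a - x)"
    using assms(1,3,8,12) by (intro mult_right_mono) auto
  ultimately have "x \<le> (\<beta> + \<eta> / 2) * (a - x)" by (simp add: mult.assoc)
  then show ?thesis using False assms(10) by simp
qed

lemma contract_sum_even:
  fixes R a :: int and \<beta> \<delta> x r \<eta> :: real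
  assumes "R \<ge> 4" "even R" "a \<ge> R" "0 < \<beta>" "\<beta> < 1/3" "\<delta> * (R + 1 - \<beta>) = 1" "0 < \<delta>" "\<delta> \<le> 2/5"
    and "0 \<le> x" "x \<le> 2/5" "0 \<le> r" "r \<le> x / 2" "x \<le> \<beta> + \<eta>" "0 \<le> \<eta>" "\<eta> \<le> 1"
  shows "1/2 + (if even a then r else 1/2 - r) \<le> (\<delta> + \<eta> / 2) * (a - x)"
proof (cases "even a")
  case True
  have "\<delta> * (R + 1) = 1 + \<delta> * \<beta>" using assms(6) by (simp add: algebra_simps)
  moreover have "\<delta> * \<beta> > 0" using assms(4,7) by simp
  ultimately have \<delta>R: "1 \<le> \<delta> * (R + 1)" by linarith
  have "x * (R + 3) \<le> 2/5 * (R + 3)" using assms(1,10) by (intro mult_right_mono) auto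
  then have key: "(1 + x) * (R + 1) \<le> 2 * (a - x)" using assms(1,3) by (simp add: algebra_simps)
  have "1/2 + x/2 \<le> (1/2 + x/2) * (\<delta> * (R + 1))"
    using mult_left_mono[OF \<delta>R, of "1/2 + x/2"] assms(9) by simp
  also have "\<dots> = \<delta> * ((1 + x) * (R + 1)) / 2" by (simp add: algebra_simps)
  also have "\<dots> \<le> \<delta> * (2 * (a - x)) / 2" using key assms(7) by (intro divide_right_mono mult_left_mono) auto
  also have "\<dots> = \<delta> * (a - x)" by simp
  also have "\<dots> \<le> (\<delta> + \<eta> / 2) * (a - x)" using assms(1,3,10,14) by (intro mult_right_mono) auto
  finally show ?thesis using True assms(12) by simp
next
  case False
  then have "a \<ge> R + 1" using assms(2,3) by (cases "a = R") auto
  then have "(\<delta> + \<eta> / 2) * (R + 1 - \<beta> - \<eta>) \<le> (\<delta> + \<eta> / 2) * (a - x)"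
    using assms(7,13,14) by (intro mult_left_mono) auto
  moreover have "(\<delta> + \<eta> / 2) * (R + 1 - \<beta> - \<eta>) = 1 + \<eta> * ((R + 1 - \<beta> - \<eta>) / 2 - \<delta>)"
    using assms(6) by (simp add: field_simps)
  moreover have "\<eta> * ((R + 1 - \<beta> - \<eta>) / 2 - \<delta>) \<ge> 0"
    using assms(1,5,8,14,15) by (intro mult_nonneg_nonneg) auto
  ultimately have "1 \<le> (\<delta> + \<eta> / 2) * (a - x)" by linarith
  then show ?thesis using False assms(11) by simp
qed

lemma contract_diff_odd:
  fixes R a :: int and \<beta> x r \<eta> :: real
  assumes "R \<ge> 3" "odd R" "a \<ge> R" "\<beta> * (R + 1 - \<beta>) = 1" "0 < \<beta>" "\<beta> < 1/3"
    and "0 \<le> x" "x \<le> 2/5" "0 \<le> r" "r \<le> x / 2" "x - 2 * r \<le> \<beta> + \<eta>" "0 \<le> \<eta>" "\<eta> \<le> 1"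
  shows "1 - 2 * (if even a then r else 1/2 - r) \<le> (\<beta> + \<eta> / 2) * (a - x)"
proof (cases "even a")
  case True
  then have a: "a \<ge> R + 1" using assms(2,3) by (cases "a = R") auto
  have "1 - 2 * r \<le> (\<beta> + \<eta> / 2) * (a - x)"
  proof (cases "x \<le> \<beta>")
    case True
    have "1 = \<beta> * (R + 1 - \<beta>)" using assms(4) by simp
    also have "\<dots> \<le> \<beta> * (a - x)" using a True assms(5) by (intro mult_left_mono) auto
    also have "\<dots> \<le> (\<beta> + \<eta> / 2) * (a - x)" using a assms(1,8,12) by (intro mult_right_mono) auto
    finally show ?thesis using assms(9) by linarith
  next
    case False
    have "(\<beta> + \<eta> / 2) * (R + 1 - x) \<le> (\<beta> + \<eta> / 2) * (a - x)"
      using a assms(5,12) by (intro mult_left_mono) auto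
    moreover have "(\<beta> + \<eta> / 2) * (R + 1 - x) - (1 - x + \<beta> + \<eta>) =
        (\<beta> * (R + 1 - \<beta>) - 1) + (1 - \<beta>) * (x - \<beta>) + \<eta> * ((R + 1 - x) / 2 - 1)"
      by (simp add: field_simps)
    moreover have "(1 - \<beta>) * (x - \<beta>) \<ge> 0" using False assms(6) by simp
    moreover have "\<eta> * ((R + 1 - x) / 2 - 1) \<ge> 0" using assms(1,8,12) by (intro mult_nonneg_nonneg) auto
    ultimately show ?thesis using assms(4,11) by linarith
  qed
  then show ?thesis using True by simp
next
  case False
  have "(real_of_int R + 2) * x \<le> (real_of_int R + 2) * (2/5)" using assms(1,8) by (intro mult_left_mono) auto
  then have "(R + 1) * x \<le> a - x" using assms(1,3) by (simp add: algebra_simps)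
  then have "\<beta> * ((R + 1) * x) \<le> \<beta> * (a - x)" using assms(5) by (intro mult_left_mono) auto
  moreover have "\<beta> * (R + 1) = 1 + \<beta> * \<beta>" using assms(4) by (simp add: algebra_simps)
  then have "1 * x \<le> (\<beta> * (R + 1)) * x" using assms(7) by (intro mult_right_mono) auto
  moreover have "\<beta> * (a - x) \<le> (\<beta> + \<eta> / 2) * (a - x)"
    using assms(1,3,8,12) by (intro mult_right_mono) auto
  ultimately have "x \<le> (\<beta> + \<eta> / 2) * (a - x)" by (simp add: mult.assoc)
  then show ?thesis using False assms(10) by simp
qed

lemma contract_sum_odd:
  fixes R a :: int and \<beta> \<delta> x r \<eta> :: real
  assumes "R \<ge> 3" "odd R" "a \<ge> R" "0 < \<beta>" "\<delta> * (R - \<beta>) = 1" "0 < \<delta>" "\<delta> \<le> 2/5"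
    and "0 \<le> x" "x \<le> 2/5" "0 \<le> r" "r \<le> x / 2" "x - 2 * r \<le> \<beta> + \<eta>" "0 \<le> \<eta>" "\<eta> \<le> 1"
  shows "1/2 + (if even a then r else 1/2 - r) \<le> (\<delta> + \<eta> / 2) * (a - x)"
proof (cases "even a")
  case True
  then have a: "a \<ge> R + 1" using assms(2,3) by (cases "a = R") auto
  have "\<delta> * R = 1 + \<delta> * \<beta>" using assms(5) by (simp add: algebra_simps)
  moreover have "\<delta> * \<beta> > 0" using assms(4,6) by simp
  ultimately have \<delta>R: "1 \<le> \<delta> * R" by linarith
  have "(real_of_int R + 2) * x \<le> (real_of_int R + 2) * 1" using assms(1,9) by (intro mult_left_mono) auto
  then have key: "(1 + x) * R \<le> 2 * (a - x)" using a by (simp add: algebra_simps)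
  have "1/2 + x/2 \<le> (1/2 + x/2) * (\<delta> * R)"
    using mult_left_mono[OF \<delta>R, of "1/2 + x/2"] assms(8) by simp
  also have "\<dots> = \<delta> * ((1 + x) * R) / 2" by (simp add: algebra_simps)
  also have "\<dots> \<le> \<delta> * (2 * (a - x)) / 2" using key assms(6) by (intro divide_right_mono mult_left_mono) auto
  also have "\<dots> = \<delta> * (a - x)" by simp
  also have "\<dots> \<le> (\<delta> + \<eta> / 2) * (a - x)" using assms(1,3,9,13) by (intro mult_right_mono) auto
  finally show ?thesis using True assms(11) by simp
next
  case False
  have "1 - r \<le> (\<delta> + \<eta> / 2) * (a - x)"
  proof (cases "x \<le> \<beta>")
    case True
    have "1 = \<delta> * (R - \<beta>)" using assms(5) by simp
    also have "\<dots> \<le> \<delta> * (a - x)" using True assms(3,6) by (intro mult_left_mono) auto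
    also have "\<dots> \<le> (\<delta> + \<eta> / 2) * (a - x)" using assms(1,3,9,13) by (intro mult_right_mono) auto
    finally show ?thesis using assms(10) by linarith
  next
    case False
    have "(\<delta> + \<eta> / 2) * (R - x) \<le> (\<delta> + \<eta> / 2) * (a - x)"
      using assms(3,6,13) by (intro mult_left_mono) auto
    moreover have "(\<delta> + \<eta> / 2) * (R - x) - (1 - x / 2 + \<beta> / 2 + \<eta> / 2) =
        (\<delta> * (R - \<beta>) - 1) + (x - \<beta>) * (1/2 - \<delta>) + \<eta> / 2 * (R - x - 1)"
      by (simp add: field_simps)
    moreover have "(x - \<beta>) * (1/2 - \<delta>) \<ge> 0" using False assms(7) by simp
    moreover have "\<eta> / 2 * (R - x - 1) \<ge> 0" using assms(1,9,13) by (intro mult_nonneg_nonneg) auto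
    ultimately show ?thesis using assms(5,12) by linarith
  qed
  then show ?thesis using False by simp
qed

lemma ratio_region_step:
  fixes R a :: int and \<eta> x r :: real
  assumes "R \<ge> 3" "a \<ge> R" "ratio_region R \<eta> x r" "0 \<le> \<eta>" "\<eta> \<le> 1"
  defines "\<rho> \<equiv> if even a then r else 1/2 - r"
  shows "ratio_region R (\<eta> / 2) (1 / (a - x)) (\<rho> / (a - x))"
proof -
  have reg: "0 < x" "x \<le> 2/5" "0 \<le> r" "r \<le> x / 2" "x - 2 * r \<le> beta_R R + \<eta>"
    "x / 2 + r \<le> delta_R R + \<eta>" "even R \<Longrightarrow> x \<le> beta_R R + \<eta>"
    using assms(3) unfolding ratio_region_def by auto
  have D: "a - x > 0" using assms(1,2) reg(2) by linarith
  have box: "0 < 1 / (a - x)" "1 / (a - x) \<le> 2/5" "0 \<le> \<rho> / (a - x)" "\<rho> / (a - x) \<le> 1 / (a - x) / 2"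
    using ratio_step_box[of a x r] assms(1,2) reg(1-4) unfolding \<rho>_def by auto
  have bounds: "1 - 2 * \<rho> \<le> (beta_R R + \<eta> / 2) * (a - x)
      \<and> 1/2 + \<rho> \<le> (delta_R R + \<eta> / 2) * (a - x)
      \<and> (even R \<longrightarrow> 1 \<le> (beta_R R + \<eta> / 2) * (a - x))"
  proof (cases "even R")
    case True
    note c = beta_delta_even[OF assms(1) True]
    have "1 - 2 * \<rho> \<le> (beta_R R + \<eta> / 2) * (a - x)"
      unfolding \<rho>_def using c reg assms(2,4,5) True by (intro contract_diff_even) auto
    moreover have "1/2 + \<rho> \<le> (delta_R R + \<eta> / 2) * (a - x)"
      unfolding \<rho>_def using c reg assms(2,4,5) True by (intro contract_sum_even) auto
    moreover have "1 \<le> (beta_R R + \<eta> / 2) * (a - x)"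
      using c reg assms(2,4,5) True by (intro contract_x_even) auto
    ultimately show ?thesis by blast
  next
    case False
    note c = beta_delta_odd[OF assms(1) False]
    have "1 - 2 * \<rho> \<le> (beta_R R + \<eta> / 2) * (a - x)"
      unfolding \<rho>_def using c reg assms(1,2,4,5) False by (intro contract_diff_odd) auto
    moreover have "1/2 + \<rho> \<le> (delta_R R + \<eta> / 2) * (a - x)"
      unfolding \<rho>_def using c reg assms(1,2,4,5) False by (intro contract_sum_odd) auto
    ultimately show ?thesis using False by blast
  qed
  have "1 / (a - x) - 2 * (\<rho> / (a - x)) = (1 - 2 * \<rho>) / (a - x)"
    "1 / (a - x) / 2 + \<rho> / (a - x) = (1/2 + \<rho>) / (a - x)"
    by (simp_all add: diff_divide_distrib add_divide_distrib)
  then show ?thesis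
    unfolding ratio_region_def using box bounds D by (simp add: pos_divide_le_eq)
qed

section \<open>The form at the diagonal point\<close>

lemma contraction_const_bounds:
  fixes b d T :: real
  assumes "0 < b" "b \<le> 2/5" "0 < d" "d \<le> 2/5" "T = (1 - b) * (1 - 2 * d) / (1 - b * d)"
  shows "0 < 1 - b * d" "0 \<le> T" "T \<le> 1 - 2 * d"
proof -
  have "b * d \<le> 2/5 * 1" using assms by (intro mult_mono) auto
  then show pos: "0 < 1 - b * d" by linarith
  then show "0 \<le> T" using assms by simp
  have "(1 - b) * (1 - 2 * d) \<le> (1 - b * d) * (1 - 2 * d)"
    using assms mult_left_mono[of d 1 b] by (intro mult_right_mono) auto
  then show "T \<le> 1 - 2 * d" using pos assms(5) by (simp add: divide_le_eq mult.commute)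
qed

text \<open>\<open>\<psi>(p, g) = (1 - p)(1 - 2g) - T (1 - p g)\<close> vanishes at \<open>(b, d)\<close> and is decreasing in
  each variable on the relevant box, so it is bounded below near \<open>(b, d)\<close>.\<close>

lemma psi_lower_bound:
  fixes P G b d \<eta> T :: real
  assumes "0 \<le> P" "P \<le> b + \<eta>" "0 \<le> G" "G \<le> d + \<eta>" "P \<le> 2/5"
    and "0 < b" "b \<le> 2/5" "0 < d" "d \<le> 2/5" "0 \<le> \<eta>" "\<eta> \<le> 1/25"
    and T: "T = (1 - b) * (1 - 2 * d) / (1 - b * d)"
  shows "(1 - P) * (1 - 2 * G) \<ge> T * (1 - P * G) - 3 * \<eta>"
proof -
  define \<psi> where "\<psi> p g = (1 - p) * (1 - 2 * g) - T * (1 - p * g)" for p g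
  note T_bounds = contraction_const_bounds[OF assms(6-9) T]
  have "(2 + T) * (d + \<eta>) \<le> (3 - 2 * d) * (d + \<eta>)"
    using T_bounds(3) assms(8,10) by (intro mult_right_mono) auto
  also have "\<dots> = 22/25 - (2/5 - d) * (11/5 - 2 * d) + (3 - 2 * d) * \<eta>" by (simp add: field_simps)
  also have "\<dots> \<le> 22/25 - 0 + 3 * (1/25)"
    using assms by (intro add_mono diff_mono mult_mono mult_nonneg_nonneg) auto
  finally have c1: "(2 + T) * (d + \<eta>) \<le> 1" by simp
  have c2: "(2 + T) * P \<le> 3 * (2/5)" using T_bounds(3) assms(1,5,8) by (intro mult_mono) auto
  have "\<psi> P G - \<psi> P (d + \<eta>) = (G - (d + \<eta>)) * ((2 + T) * P - 2)"
    unfolding \<psi>_def by (simp add: algebra_simps)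
  moreover have "(G - (d + \<eta>)) * ((2 + T) * P - 2) \<ge> 0"
    using assms(4) c2 by (intro mult_nonpos_nonpos) auto
  ultimately have s1: "\<psi> P G \<ge> \<psi> P (d + \<eta>)" by linarith
  have "\<psi> P (d + \<eta>) - \<psi> (b + \<eta>) (d + \<eta>) = (P - (b + \<eta>)) * ((2 + T) * (d + \<eta>) - 1)"
    unfolding \<psi>_def by (simp add: algebra_simps)
  moreover have "(P - (b + \<eta>)) * ((2 + T) * (d + \<eta>) - 1) \<ge> 0"
    using assms(2) c1 by (intro mult_nonpos_nonpos) auto
  ultimately have s2: "\<psi> P (d + \<eta>) \<ge> \<psi> (b + \<eta>) (d + \<eta>)" by linarith
  have "\<psi> b d = 0" unfolding \<psi>_def using T T_bounds(1) by simp
  moreover have "\<psi> (b + \<eta>) (d + \<eta>) =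
      \<psi> b d + \<eta> * ((2 + T) * d - 1) + \<eta> * ((2 + T) * b - 2) + (2 + T) * \<eta> * \<eta>"
    unfolding \<psi>_def by (simp add: algebra_simps)
  moreover have "\<eta> * ((2 + T) * d - 1) \<ge> \<eta> * (-1)" "\<eta> * ((2 + T) * b - 2) \<ge> \<eta> * (-2)"
    using assms(6,8,10) T_bounds(2) by (intro mult_left_mono; simp)+
  moreover have "(2 + T) * \<eta> * \<eta> \<ge> 0" using assms(10) T_bounds(2) by simp
  ultimately have s3: "\<psi> (b + \<eta>) (d + \<eta>) \<ge> -3 * \<eta>" by linarith
  show ?thesis using s1 s2 s3 unfolding \<psi>_def by linarith
qed

lemma normalized_form_lower_bound:
  fixes s al f e b d \<eta> :: real
  assumes "0 \<le> s" "0 \<le> al" "\<bar>f\<bar> \<le> s / 2" "\<bar>e\<bar> \<le> al / 2" "f * e \<le> 0" "s \<le> 2/5" "al \<le> 2/5"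
    and "s - 2 * \<bar>f\<bar> \<le> b + \<eta>" "s / 2 + \<bar>f\<bar> \<le> d + \<eta>" "al - 2 * \<bar>e\<bar> \<le> b + \<eta>" "al / 2 + \<bar>e\<bar> \<le> d + \<eta>"
    and "0 < b" "b \<le> 2/5" "0 < d" "d \<le> 2/5" "0 \<le> \<eta>" "\<eta> \<le> 1/25"
    and T: "T = (1 - b) * (1 - 2 * d) / (1 - b * d)"
  shows "(1 - s + 2 * f) * (1 - al + 2 * e) \<ge> T * (1 - s * al) - 3 * \<eta>"
proof -
  have T0: "T \<ge> 0" using contraction_const_bounds[OF assms(12-15) T] by simp
  have sym: "(1 - P) * (1 - 2 * G) \<ge> T * (1 - s * al) - 3 * \<eta>"
    if "0 \<le> P" "P \<le> b + \<eta>" "0 \<le> G" "G \<le> d + \<eta>" "P \<le> 2/5" "P * G \<le> s * al" for P G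
  proof -
    have "T * (1 - s * al) \<le> T * (1 - P * G)" using T0 that(6) by (intro mult_left_mono) auto
    then show ?thesis using psi_lower_bound[OF that(1-5) assms(12-17) T] by linarith
  qed
  consider "f \<ge> 0" "e \<le> 0" | "f \<le> 0" "e \<ge> 0" using assms(5) by (auto simp: mult_le_0_iff)
  then show ?thesis
  proof cases
    case 1
    have "(s - 2 * f) * (al / 2 - e) \<le> s * al" using assms(1-4) 1 by (intro mult_mono) auto
    then have "(1 - (s - 2 * f)) * (1 - 2 * (al / 2 - e)) \<ge> T * (1 - s * al) - 3 * \<eta>"
      using assms 1 by (intro sym) auto
    then show ?thesis by (simp add: algebra_simps)
  next
    case 2
    have "(al - 2 * e) * (s / 2 - f) \<le> s * al" using assms(1-4) 2 by (subst mult.commute, intro mult_mono) auto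
    then have "(1 - (al - 2 * e)) * (1 - 2 * (s / 2 - f)) \<ge> T * (1 - s * al) - 3 * \<eta>"
      using assms 2 by (intro sym) auto
    then show ?thesis by (simp add: algebra_simps)
  qed
qed

lemma coord_prod_half_ge:
  fixes q0 q1 d0 d1 \<phi> e T \<eta> :: real
  assumes "0 < q1" "0 < d0" "q1 * d0 - q0 * d1 = 1" "0 \<le> \<eta>" "(q0 / q1) * (d1 / d0) \<le> 4/25"
    and "(1 - q0 / q1 + 2 * (\<phi> / q1)) * (1 - d1 / d0 + 2 * (e / d0)) \<ge> T * (1 - (q0 / q1) * (d1 / d0)) - 3 * \<eta>"
  shows "coord_prod q0 q1 d0 d1 \<phi> e (1/2) (1/2) \<ge> T / 4 - \<eta>"
proof -
  define H where "H = (1 - q0 / q1 + 2 * (\<phi> / q1)) * (1 - d1 / d0 + 2 * (e / d0))"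
  define X where "X = 1 - (q0 / q1) * (d1 / d0)"
  have "q1 * d0 * X = q1 * d0 - q0 * d1" using assms(1,2) by (simp add: X_def field_simps)
  then have norm: "q1 * d0 * X = 1" using assms(3) by simp
  have "q1 * d0 * (21/25) \<le> q1 * d0 * X"
    using assms(1,2,5) unfolding X_def by (intro mult_left_mono) auto
  then have qd: "q1 * d0 \<le> 25/21" using norm by linarith
  have "coord_prod q0 q1 d0 d1 \<phi> e (1/2) (1/2) = q1 * d0 / 4 * H"
    using assms(1,2) by (simp add: coord_prod_def H_def field_simps)
  also have "\<dots> \<ge> q1 * d0 / 4 * (T * X - 3 * \<eta>)"
    using assms(1,2,6) unfolding H_def X_def by (intro mult_left_mono) auto
  also have "q1 * d0 / 4 * (T * X - 3 * \<eta>) = T * (q1 * d0 * X) / 4 - 3 * \<eta> * (q1 * d0) / 4"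
    by (simp add: algebra_simps)
  finally have "coord_prod q0 q1 d0 d1 \<phi> e (1/2) (1/2) \<ge> T / 4 - 3 * \<eta> * (q1 * d0) / 4"
    unfolding norm by simp
  moreover have "3 * \<eta> * (q1 * d0) \<le> 3 * \<eta> * (25/21)" using qd assms(4) by (intro mult_left_mono) auto
  ultimately show ?thesis using assms(4) by linarith
qed

lemma C_R_eq_contraction_const:
  "C_R R = (1 - beta_R R) * (1 - 2 * delta_R R) / (1 - beta_R R * delta_R R) / 4"
  by (simp add: C_R_def mult.commute)

lemma C_R_le_quarter:
  assumes "R \<ge> 3"
  shows "C_R R \<le> 1/4"
proof -
  note bd = beta_delta_bounds[OF assms]
  have "(1 - beta_R R) * (1 - 2 * delta_R R) / (1 - beta_R R * delta_R R) \<le> 1"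
    using contraction_const_bounds[OF bd refl] bd by linarith
  from divide_right_mono[OF this, of 4] show ?thesis unfolding C_R_eq_contraction_const by simp
qed

section \<open>Contraction of the ratios along the expansion\<close>

context ncf_tail
begin

definition past_x :: "nat \<Rightarrow> real" where
  "past_x j = ncf_qr \<alpha> j / ncf_qr \<alpha> (Suc j)"

definition past_r :: "nat \<Rightarrow> real" where
  "past_r j = \<bar>ncf_Phi \<alpha> j\<bar> / ncf_qr \<alpha> (Suc j)"

definition future_r :: "nat \<Rightarrow> real" where
  "future_r j = \<bar>ncf_E \<alpha> j\<bar> / ncf_Dr \<alpha> j"

lemma ar_minus_past_x: "ncf_ar \<alpha> (Suc j) - past_x j = ncf_qr \<alpha> (Suc (Suc j)) / ncf_qr \<alpha> (Suc j)"
  using qr_Suc_ge_one[of j] by (simp add: past_x_def ncf_qr_rec field_simps)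

lemma past_x_Suc: "past_x (Suc j) = 1 / (ncf_ar \<alpha> (Suc j) - past_x j)"
  by (simp only: ar_minus_past_x) (simp add: past_x_def)

lemma past_r_Suc:
  "past_r (Suc j) =
     (if even (ncf_a \<alpha> (Suc j)) then past_r j else 1/2 - past_r j) / (ncf_ar \<alpha> (Suc j) - past_x j)"
proof -
  have "ncf_qr \<alpha> (Suc j) > 0" using qr_Suc_ge_one[of j] by simp
  then have "\<bar>ncf_Phi \<alpha> (Suc j)\<bar> =
      (if even (ncf_a \<alpha> (Suc j)) then past_r j else 1/2 - past_r j) * ncf_qr \<alpha> (Suc j)"
    using abs_Phi_Suc[of j] by (simp add: past_r_def field_simps)
  then show ?thesis by (simp add: ar_minus_past_x past_r_def)
qed

lemma past_x_bounds: "0 \<le> past_x j" "past_x j < 1"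
  using qr_nonneg[of j] qr_Suc_ge[of j] qr_Suc_ge_one[of j] by (simp_all add: past_x_def)

lemma past_r_bounds: "0 \<le> past_r j" "past_r j \<le> 1/2"
  using Phi_sign_bound[of j] qr_Suc_ge_one[of j] by (simp_all add: past_r_def field_simps)

lemma past_x_le_half: "j \<ge> K \<Longrightarrow> past_x j \<le> 1/2"
proof -
  assume "j \<ge> K"
  then obtain i where i: "j = Suc i" "Suc i \<ge> K" using K_pos by (cases j) auto
  then have "ncf_ar \<alpha> (Suc i) - past_x i \<ge> 2" using ar_ge_3[of "Suc i"] past_x_bounds(2)[of i] by linarith
  then show ?thesis unfolding i past_x_Suc by (simp add: field_simps)
qed

lemma past_region: "j \<ge> K + 1 + m \<Longrightarrow> ratio_region R (1 / 2 ^ m) (past_x j) (past_r j)"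
proof (induction m arbitrary: j)
  case 0
  then obtain i where i: "j = Suc i" "i \<ge> K" by (cases j) auto
  have "ncf_a \<alpha> (Suc i) \<ge> 3" using a_ge_R[of "Suc i"] R_ge_3 i by simp
  note box = ratio_step_box[OF this past_x_bounds(1) past_x_le_half[OF i(2)] past_r_bounds[of i]]
  show ?case unfolding i past_x_Suc past_r_Suc ncf_ar_def power_0 div_by_1
    by (rule ratio_region_one[OF R_ge_3 box])
next
  case (Suc m)
  then obtain i where i: "j = Suc i" "i \<ge> K + 1 + m" by (cases j) auto
  have "ratio_region R (1 / 2 ^ m / 2) (past_x (Suc i)) (past_r (Suc i))"
    unfolding past_x_Suc past_r_Suc ncf_ar_def
    using a_ge_R[of "Suc i"] Suc.IH[OF i(2)] i by (intro ratio_region_step R_ge_3) auto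
  then show ?case using i by (simp add: mult.commute)
qed

lemma future_r_Suc:
  "future_r j = (if even (ncf_a \<alpha> (Suc j)) then future_r (Suc j) else 1/2 - future_r (Suc j))
     / (of_int (ncf_a \<alpha> (Suc j)) - ncf_rem \<alpha> (Suc j))"
proof -
  have D: "ncf_Dr \<alpha> j > 0" "ncf_Dr \<alpha> (Suc j) > 0" using Dr_pos by auto
  have "\<bar>ncf_E \<alpha> j\<bar> =
      (if even (ncf_a \<alpha> (Suc j)) then future_r (Suc j) else 1/2 - future_r (Suc j)) * ncf_Dr \<alpha> (Suc j)"
    using abs_E_eq[of j] D by (simp add: future_r_def field_simps)
  then have "future_r j = (if even (ncf_a \<alpha> (Suc j)) then future_r (Suc j) else 1/2 - future_r (Suc j))
      * ncf_rem \<alpha> j"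
    using D(1) by (simp add: future_r_def Dr_Suc)
  then show ?thesis by (subst (asm) rem_eq) simp
qed

lemma future_r_bounds: "0 \<le> future_r j" "future_r j \<le> ncf_rem \<alpha> j / 2"
  using E_sign_bound[of j] Dr_pos[of j] by (simp_all add: future_r_def Dr_Suc field_simps)

lemma future_region: "j \<ge> K \<Longrightarrow> ratio_region R (1 / 2 ^ m) (ncf_rem \<alpha> j) (future_r j)"
proof (induction m arbitrary: j)
  case 0
  then show ?case
    using ratio_region_one[OF R_ge_3] rem_pos rem_le_two_fifths future_r_bounds by simp
next
  case (Suc m)
  have "ratio_region R (1 / 2 ^ m / 2) (ncf_rem \<alpha> j) (future_r j)"
    using a_ge_R[of "Suc j"] Suc by (subst rem_eq, subst future_r_Suc, intro ratio_region_step R_ge_3) auto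
  then show ?case by (simp add: mult.commute)
qed

end

context ncf_tail
begin

lemma diagonal_form_ge:
  assumes "m \<ge> 5" "j \<ge> K + 1 + m" "\<bar>s\<bar> = 1"
  shows "coord_prod (ncf_qr \<alpha> j) (ncf_qr \<alpha> (Suc j)) (ncf_Dr \<alpha> j) (ncf_Dr \<alpha> (Suc j))
     (s * ncf_Phi \<alpha> j) (s * ncf_E \<alpha> j) (1/2) (1/2) \<ge> C_R R - 1 / 2 ^ m"
proof -
  define \<eta> :: real where "\<eta> = 1 / 2 ^ m"
  have "(2::real) ^ 5 \<le> 2 ^ m" using assms(1) by (intro power_increasing) auto
  then have \<eta>: "0 \<le> \<eta>" "\<eta> \<le> 1/25" by (simp_all add: \<eta>_def field_simps)
  define q0 q1 d0 d1 where "q0 = ncf_qr \<alpha> j" "q1 = ncf_qr \<alpha> (Suc j)" "d0 = ncf_Dr \<alpha> j" "d1 = ncf_Dr \<alpha> (Suc j)"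
  have pos: "0 < q1" "0 < d0" using qr_Suc_ge_one[of j] Dr_pos[of j] by (simp_all add: q0_q1_d0_d1_def)
  have x: "past_x j = q0 / q1" and al: "ncf_rem \<alpha> j = d1 / d0"
    using pos(2) by (simp_all add: past_x_def q0_q1_d0_d1_def Dr_Suc)
  have f: "\<bar>s * ncf_Phi \<alpha> j / q1\<bar> = past_r j" and e: "\<bar>s * ncf_E \<alpha> j / d0\<bar> = future_r j"
    using pos assms(3) by (simp_all add: past_r_def future_r_def q0_q1_d0_d1_def abs_mult)
  have "(s * ncf_Phi \<alpha> j / q1) * (s * ncf_E \<alpha> j / d0) = (s * s) * (ncf_Phi \<alpha> j * ncf_E \<alpha> j) / (q1 * d0)"
    by simp
  also have "\<dots> = ncf_Phi \<alpha> j * ncf_E \<alpha> j / (q1 * d0)" using abs_mult_self_eq[of s] assms(3) by simp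
  finally have eq: "(s * ncf_Phi \<alpha> j / q1) * (s * ncf_E \<alpha> j / d0) = ncf_Phi \<alpha> j * ncf_E \<alpha> j / (q1 * d0)" .
  have "ncf_Phi \<alpha> j * ncf_E \<alpha> j / (q1 * d0) \<le> 0"
    using Phi_E_nonpos[of j] pos by (intro divide_nonpos_pos) auto
  with eq have fe: "(s * ncf_Phi \<alpha> j / q1) * (s * ncf_E \<alpha> j / d0) \<le> 0" by linarith
  have IP: "ratio_region R \<eta> (q0 / q1) \<bar>s * ncf_Phi \<alpha> j / q1\<bar>"
    using past_region[OF assms(2)] unfolding x f \<eta>_def .
  have IF: "ratio_region R \<eta> (d1 / d0) \<bar>s * ncf_E \<alpha> j / d0\<bar>"
    using future_region[of j m] assms(2) unfolding al e \<eta>_def by simp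
  have "(q0 / q1) * (d1 / d0) \<le> 2/5 * (2/5)"
    using IP IF unfolding ratio_region_def by (intro mult_mono) auto
  moreover note bd = beta_delta_bounds[OF R_ge_3]
  moreover have "(1 - q0 / q1 + 2 * (s * ncf_Phi \<alpha> j / q1)) * (1 - d1 / d0 + 2 * (s * ncf_E \<alpha> j / d0))
      \<ge> (1 - beta_R R) * (1 - 2 * delta_R R) / (1 - beta_R R * delta_R R) * (1 - (q0 / q1) * (d1 / d0)) - 3 * \<eta>"
    using IP IF fe bd \<eta> unfolding ratio_region_def by (intro normalized_form_lower_bound) auto
  ultimately have "coord_prod q0 q1 d0 d1 (s * ncf_Phi \<alpha> j) (s * ncf_E \<alpha> j) (1/2) (1/2) \<ge>
      (1 - beta_R R) * (1 - 2 * delta_R R) / (1 - beta_R R * delta_R R) / 4 - \<eta>"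
    using pos \<eta> ncf_qr_Dr_det[of \<alpha> j] unfolding q0_q1_d0_d1_def
    by (intro coord_prod_half_ge) (auto simp: mult.commute)
  then show ?thesis by (simp add: q0_q1_d0_d1_def C_R_eq_contraction_const \<eta>_def)
qed

end

section \<open>Descent of the coordinates\<close>

lemma ncf_w_valley_exists:
  assumes "\<bar>ncf_w \<alpha> n m (Suc J)\<bar> < \<bar>ncf_w \<alpha> n m J\<bar>"
  obtains j where "j \<ge> J" "\<bar>ncf_w \<alpha> n m (Suc j)\<bar> \<le> \<bar>ncf_w \<alpha> n m j\<bar>"
    "\<bar>ncf_w \<alpha> n m (Suc j)\<bar> \<le> \<bar>ncf_w \<alpha> n m (Suc (Suc j))\<bar>"
proof (rule ccontr)
  assume no_valley: "\<not> thesis"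
  have "\<bar>ncf_w \<alpha> n m (J + Suc k)\<bar> < \<bar>ncf_w \<alpha> n m (J + k)\<bar>" for k
  proof (induction k)
    case 0
    then show ?case using assms by simp
  next
    case (Suc k)
    then have "\<not> \<bar>ncf_w \<alpha> n m (Suc (J + k))\<bar> \<le> \<bar>ncf_w \<alpha> n m (Suc (Suc (J + k)))\<bar>"
      using no_valley that[of "J + k"] by auto
    then show ?case by simp
  qed
  then show False using ncf_w_not_strictly_decreasing[of \<alpha> n m J] by (meson not_le)
qed

context ncf_tail
begin

lemma qr_Suc_ge_double: "j \<ge> K \<Longrightarrow> ncf_qr \<alpha> (Suc j) \<ge> 2 * ncf_qr \<alpha> j"
proof -
  assume "j \<ge> K"
  then obtain i where i: "j = Suc i" "Suc i \<ge> K" using K_pos by (cases j) auto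
  have "ncf_ar \<alpha> (Suc i) * ncf_qr \<alpha> (Suc i) \<ge> 3 * ncf_qr \<alpha> (Suc i)"
    using ar_ge_3[OF i(2)] qr_nonneg[of "Suc i"] by (intro mult_right_mono) auto
  then show ?thesis unfolding i(1) using ncf_qr_rec[of \<alpha> i] qr_Suc_ge[of i] by linarith
qed

lemma valley_product_ge:
  assumes "k \<ge> 5" "j \<ge> K + 1 + k"
    and "\<bar>ncf_w \<alpha> n m (Suc j)\<bar> \<le> \<bar>ncf_w \<alpha> n m j\<bar>"
    and "\<bar>ncf_w \<alpha> n m (Suc j)\<bar> \<le> \<bar>ncf_w \<alpha> n m (Suc (Suc j))\<bar>"
  shows "C_R R - 1 / 2 ^ k \<le> \<bar>of_int n * (of_int m - \<alpha> * of_int n + gamma_star \<alpha>)\<bar>"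
  unfolding product_eq_coord_prod[of n m j]
proof (rule coord_prod_valley_bound[OF ncf_qr_rec ncf_Dr_rec ncf_Phi_Suc E_rec _ _ _ _ _ _ _ _ _ _ _ ncf_w_rec])
  have j: "j \<ge> K" "Suc j \<ge> K" "j \<ge> 1" using assms(2) by auto
  show "0 \<le> ncf_qr \<alpha> j" "2 * ncf_qr \<alpha> j \<le> ncf_qr \<alpha> (Suc j)"
    "2 * ncf_qr \<alpha> (Suc j) \<le> ncf_qr \<alpha> (Suc (Suc j))"
    using qr_nonneg qr_Suc_ge_double j by auto
  show "0 \<le> ncf_Dr \<alpha> (Suc (Suc j))" "2 * ncf_Dr \<alpha> (Suc (Suc j)) \<le> ncf_Dr \<alpha> (Suc j)"
    "2 * ncf_Dr \<alpha> (Suc j) \<le> ncf_Dr \<alpha> j"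
    using Dr_pos[of "Suc (Suc j)"] Dr_Suc_le_half[OF j(1)] Dr_Suc_le_half[OF j(2)] by auto
  show "\<bar>ncf_Phi \<alpha> j\<bar> \<le> ncf_qr \<alpha> j / 2" "\<bar>ncf_Phi \<alpha> (Suc j)\<bar> \<le> ncf_qr \<alpha> (Suc j) / 2"
    using abs_Phi_le j(3) by auto
  show "\<bar>ncf_E \<alpha> j\<bar> \<le> ncf_Dr \<alpha> (Suc j) / 2" "\<bar>ncf_E \<alpha> (Suc j)\<bar> \<le> ncf_Dr \<alpha> (Suc (Suc j)) / 2"
    using E_sign_bound by auto
  have "(0::real) \<le> 1 / 2 ^ k" by simp
  then show "C_R R - 1 / 2 ^ k \<le> 1/4" using C_R_le_quarter[OF R_ge_3] by linarith
  show "C_R R - 1 / 2 ^ k \<le> coord_prod (ncf_qr \<alpha> j) (ncf_qr \<alpha> (Suc j)) (ncf_Dr \<alpha> j) (ncf_Dr \<alpha> (Suc j))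
      (s * ncf_Phi \<alpha> j) (s * ncf_E \<alpha> j) (1/2) (1/2)"
    "C_R R - 1 / 2 ^ k \<le> coord_prod (ncf_qr \<alpha> (Suc j)) (ncf_qr \<alpha> (Suc (Suc j))) (ncf_Dr \<alpha> (Suc j))
      (ncf_Dr \<alpha> (Suc (Suc j))) (s * ncf_Phi \<alpha> (Suc j)) (s * ncf_E \<alpha> (Suc j)) (1/2) (1/2)"
    if "\<bar>s\<bar> = 1" for s
    using diagonal_form_ge[OF assms(1) _ that, of j] diagonal_form_ge[OF assms(1) _ that, of "Suc j"] assms(2)
    by auto
qed (use ncf_qr_Dr_det abs_ncf_w_ge_half assms(3,4) in auto)

end

lemma abs_affine_error_le:
  fixes d q x \<phi> y e :: real
  assumes "0 \<le> d" "0 \<le> q" "\<bar>y\<bar> \<le> 1"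
  shows "\<bar>d * (x - \<phi>) + q * (y - e) - d * x\<bar> \<le> d * \<bar>\<phi>\<bar> + q * (1 + \<bar>e\<bar>)"
proof -
  have "\<bar>d * (x - \<phi>) + q * (y - e) - d * x\<bar> = \<bar>q * (y - e) - d * \<phi>\<bar>" by (simp add: algebra_simps)
  also have "\<dots> \<le> q * \<bar>y - e\<bar> + d * \<bar>\<phi>\<bar>"
    using abs_triangle_ineq4[of "q * (y - e)" "d * \<phi>"] assms(1,2) by (simp add: abs_mult)
  also have "q * \<bar>y - e\<bar> \<le> q * (1 + \<bar>e\<bar>)" using assms(2,3) by (intro mult_left_mono) linarith+
  finally show ?thesis by linarith
qed

context ncf_tail
begin

lemma ncf_w_inversion:
  fixes n m :: int
  defines "Y \<equiv> of_int m - \<alpha> * of_int n + gamma_star \<alpha>"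
  shows "ncf_w \<alpha> n m j = ncf_Dr \<alpha> j * (of_int n - ncf_Phi \<alpha> j) + ncf_qr \<alpha> j * (Y - ncf_E \<alpha> j)"
    and "ncf_w \<alpha> n m (Suc j) =
      ncf_Dr \<alpha> (Suc j) * (of_int n - ncf_Phi \<alpha> j) + ncf_qr \<alpha> (Suc j) * (Y - ncf_E \<alpha> j)"
proof -
  have N: "of_int n - ncf_Phi \<alpha> j = ncf_qr \<alpha> (Suc j) * ncf_w \<alpha> n m j - ncf_qr \<alpha> j * ncf_w \<alpha> n m (Suc j)"
    using n_eq[of n j m] by simp
  have V: "Y - ncf_E \<alpha> j = ncf_Dr \<alpha> j * ncf_w \<alpha> n m (Suc j) - ncf_Dr \<alpha> (Suc j) * ncf_w \<alpha> n m j"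
    using distance_eq[of m n j] unfolding Y_def by simp
  have "ncf_Dr \<alpha> j * (of_int n - ncf_Phi \<alpha> j) + ncf_qr \<alpha> j * (Y - ncf_E \<alpha> j) =
      ncf_w \<alpha> n m j * (ncf_qr \<alpha> (Suc j) * ncf_Dr \<alpha> j - ncf_qr \<alpha> j * ncf_Dr \<alpha> (Suc j))"
    "ncf_Dr \<alpha> (Suc j) * (of_int n - ncf_Phi \<alpha> j) + ncf_qr \<alpha> (Suc j) * (Y - ncf_E \<alpha> j) =
      ncf_w \<alpha> n m (Suc j) * (ncf_qr \<alpha> (Suc j) * ncf_Dr \<alpha> j - ncf_qr \<alpha> j * ncf_Dr \<alpha> (Suc j))"
    unfolding N V by (simp_all add: algebra_simps)
  then show "ncf_w \<alpha> n m j = ncf_Dr \<alpha> j * (of_int n - ncf_Phi \<alpha> j) + ncf_qr \<alpha> j * (Y - ncf_E \<alpha> j)"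
    "ncf_w \<alpha> n m (Suc j) =
      ncf_Dr \<alpha> (Suc j) * (of_int n - ncf_Phi \<alpha> j) + ncf_qr \<alpha> (Suc j) * (Y - ncf_E \<alpha> j)"
    using ncf_qr_Dr_det[of \<alpha> j] by simp_all
qed

lemma ncf_w_near_multiple:
  fixes n m :: int
  assumes "\<bar>of_int m - \<alpha> * of_int n + gamma_star \<alpha>\<bar> \<le> 1"
  shows "\<bar>ncf_w \<alpha> n m j - ncf_Dr \<alpha> j * of_int n\<bar>
      \<le> ncf_Dr \<alpha> j * \<bar>ncf_Phi \<alpha> j\<bar> + ncf_qr \<alpha> j * (1 + \<bar>ncf_E \<alpha> j\<bar>)"
    and "\<bar>ncf_w \<alpha> n m (Suc j) - ncf_Dr \<alpha> (Suc j) * of_int n\<bar>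
      \<le> ncf_Dr \<alpha> (Suc j) * \<bar>ncf_Phi \<alpha> j\<bar> + ncf_qr \<alpha> (Suc j) * (1 + \<bar>ncf_E \<alpha> j\<bar>)"
proof -
  note err = abs_affine_error_le[OF _ _ assms]
  show "\<bar>ncf_w \<alpha> n m j - ncf_Dr \<alpha> j * of_int n\<bar>
      \<le> ncf_Dr \<alpha> j * \<bar>ncf_Phi \<alpha> j\<bar> + ncf_qr \<alpha> j * (1 + \<bar>ncf_E \<alpha> j\<bar>)"
    unfolding ncf_w_inversion(1) using err Dr_pos[of j] qr_nonneg[of j] by simp
  show "\<bar>ncf_w \<alpha> n m (Suc j) - ncf_Dr \<alpha> (Suc j) * of_int n\<bar>
      \<le> ncf_Dr \<alpha> (Suc j) * \<bar>ncf_Phi \<alpha> j\<bar> + ncf_qr \<alpha> (Suc j) * (1 + \<bar>ncf_E \<alpha> j\<bar>)"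
    unfolding ncf_w_inversion(2) using err Dr_pos[of "Suc j"] qr_nonneg[of "Suc j"] by simp
qed

text \<open>For large \<open>|n|\<close> the coordinates are close to \<open>n D\<^sub>j\<^sub>-\<^sub>1\<close>, which halves at each step.\<close>

lemma ncf_w_descends_for_large_n:
  assumes "J \<ge> K"
  obtains N :: int where "\<And>n m. N \<le> \<bar>n\<bar> \<Longrightarrow> \<bar>of_int m - \<alpha> * of_int n + gamma_star \<alpha>\<bar> \<le> 1 \<Longrightarrow>
    \<bar>ncf_w \<alpha> n m (Suc J)\<bar> < \<bar>ncf_w \<alpha> n m J\<bar>"
proof
  define e0 e1 where "e0 = ncf_Dr \<alpha> J * \<bar>ncf_Phi \<alpha> J\<bar> + ncf_qr \<alpha> J * (1 + \<bar>ncf_E \<alpha> J\<bar>)"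
    and "e1 = ncf_Dr \<alpha> (Suc J) * \<bar>ncf_Phi \<alpha> J\<bar> + ncf_qr \<alpha> (Suc J) * (1 + \<bar>ncf_E \<alpha> J\<bar>)"
  have D: "0 < ncf_Dr \<alpha> J" "0 < ncf_Dr \<alpha> (Suc J)" "2 * ncf_Dr \<alpha> (Suc J) \<le> ncf_Dr \<alpha> J"
    using Dr_pos Dr_Suc_le_half[OF assms] by auto
  have "0 \<le> ncf_Dr \<alpha> J * \<bar>ncf_Phi \<alpha> J\<bar>" "0 \<le> ncf_qr \<alpha> J * (1 + \<bar>ncf_E \<alpha> J\<bar>)"
    "0 \<le> ncf_Dr \<alpha> (Suc J) * \<bar>ncf_Phi \<alpha> J\<bar>" using D qr_nonneg[of J] by simp_all
  moreover have "ncf_qr \<alpha> (Suc J) * 1 \<le> ncf_qr \<alpha> (Suc J) * (1 + \<bar>ncf_E \<alpha> J\<bar>)"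
    by (rule mult_left_mono) (use qr_nonneg in auto)
  ultimately have e: "0 \<le> e0" "1 \<le> e1" using qr_Suc_ge_one[of J] unfolding e0_def e1_def by linarith+
  fix n m :: int
  assume n: "\<lceil>4 * (e0 + e1) / ncf_Dr \<alpha> J\<rceil> \<le> \<bar>n\<bar>"
    and Y: "\<bar>of_int m - \<alpha> * of_int n + gamma_star \<alpha>\<bar> \<le> 1"
  have "4 * (e0 + e1) / ncf_Dr \<alpha> J \<le> \<bar>of_int n\<bar>" using n by linarith
  then have big: "4 * (e0 + e1) \<le> ncf_Dr \<alpha> J * \<bar>of_int n\<bar>" using D(1) by (simp add: field_simps)
  have "\<bar>ncf_w \<alpha> n m (Suc J)\<bar> \<le> \<bar>ncf_Dr \<alpha> (Suc J) * of_int n\<bar> + e1"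
    using ncf_w_near_multiple(2)[OF Y, of J] unfolding e1_def[symmetric]
      abs_triangle_ineq[of "ncf_Dr \<alpha> (Suc J) * of_int n" "ncf_w \<alpha> n m (Suc J) - ncf_Dr \<alpha> (Suc J) * of_int n"]
    by simp
  moreover have "\<bar>ncf_Dr \<alpha> J * of_int n\<bar> \<le> \<bar>ncf_w \<alpha> n m J\<bar> + e0"
    using ncf_w_near_multiple(1)[OF Y, of J] unfolding e0_def[symmetric]
      abs_triangle_ineq[of "ncf_w \<alpha> n m J" "ncf_Dr \<alpha> J * of_int n - ncf_w \<alpha> n m J"]
    by (simp add: abs_minus_commute)
  moreover have "(2 * ncf_Dr \<alpha> (Suc J)) * \<bar>of_int n\<bar> \<le> ncf_Dr \<alpha> J * \<bar>of_int n\<bar>"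
    using D(3) by (intro mult_right_mono) auto
  ultimately show "\<bar>ncf_w \<alpha> n m (Suc J)\<bar> < \<bar>ncf_w \<alpha> n m J\<bar>"
    using big e D(1,2) by (simp add: abs_mult mult.assoc)
qed

lemma product_lower_bound:
  assumes "\<epsilon> > 0"
  obtains N :: int where
    "\<And>n m. N \<le> \<bar>n\<bar> \<Longrightarrow> C_R R - \<epsilon> \<le> \<bar>of_int n * (of_int m - \<alpha> * of_int n + gamma_star \<alpha>)\<bar>"
proof -
  obtain k0 where "(1/2::real) ^ k0 < \<epsilon>" using real_arch_pow_inv[of \<epsilon> "1/2"] assms by auto
  define k where "k = k0 + 5"
  have "(1::real) / 2 ^ k \<le> (1/2) ^ k0" by (simp add: k_def power_add field_simps)
  with \<open>(1/2) ^ k0 < \<epsilon>\<close> have k: "k \<ge> 5" "1 / 2 ^ k \<le> \<epsilon>" by (simp_all add: k_def)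
  obtain N where N: "\<And>n m. N \<le> \<bar>n\<bar> \<Longrightarrow> \<bar>of_int m - \<alpha> * of_int n + gamma_star \<alpha>\<bar> \<le> 1 \<Longrightarrow>
      \<bar>ncf_w \<alpha> n m (Suc (K + 1 + k))\<bar> < \<bar>ncf_w \<alpha> n m (K + 1 + k)\<bar>"
    using ncf_w_descends_for_large_n[of "K + 1 + k"] by auto
  show thesis
  proof (rule that[of "max N 1"])
    fix n m :: int
    assume "max N 1 \<le> \<bar>n\<bar>"
    then have n: "N \<le> \<bar>n\<bar>" "1 \<le> \<bar>real_of_int n\<bar>" by linarith+
    define Y where "Y = of_int m - \<alpha> * of_int n + gamma_star \<alpha>"
    show "C_R R - \<epsilon> \<le> \<bar>of_int n * (of_int m - \<alpha> * of_int n + gamma_star \<alpha>)\<bar>"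
    proof (cases "\<bar>of_int n * Y\<bar> \<le> 1")
      case True
      have "1 * \<bar>Y\<bar> \<le> \<bar>of_int n\<bar> * \<bar>Y\<bar>" using n(2) by (intro mult_right_mono) auto
      then have "\<bar>Y\<bar> \<le> 1" using True by (simp add: abs_mult)
      then obtain j where j: "j \<ge> K + 1 + k" "\<bar>ncf_w \<alpha> n m (Suc j)\<bar> \<le> \<bar>ncf_w \<alpha> n m j\<bar>"
          "\<bar>ncf_w \<alpha> n m (Suc j)\<bar> \<le> \<bar>ncf_w \<alpha> n m (Suc (Suc j))\<bar>"
        using ncf_w_valley_exists[OF N[OF n(1)]] unfolding Y_def by (metis le_trans)
      show ?thesis using valley_product_ge[OF k(1) j] k(2) by linarith
    next
      case False
      then show ?thesis using C_R_le_quarter[OF R_ge_3] assms unfolding Y_def by linarith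
    qed
  qed
qed

lemma ncf_w_decreasing_if_exact:
  assumes "of_int m - \<alpha> * of_int n + gamma_star \<alpha> = 0" "j \<ge> K"
  shows "\<bar>ncf_w \<alpha> n m (Suc j)\<bar> < \<bar>ncf_w \<alpha> n m j\<bar>"
proof -
  have D: "0 < ncf_Dr \<alpha> j" "ncf_Dr \<alpha> (Suc j) \<le> 2/5 * ncf_Dr \<alpha> j"
    using Dr_pos[of j] Dr_Suc[of j] rem_le_two_fifths[OF assms(2)] by (simp_all add: mult_right_mono)
  have w: "\<bar>ncf_w \<alpha> n m j\<bar> \<ge> 1/2" by (rule abs_ncf_w_ge_half)
  have "ncf_Dr \<alpha> j * ncf_w \<alpha> n m (Suc j) = ncf_Dr \<alpha> (Suc j) * ncf_w \<alpha> n m j - ncf_E \<alpha> j"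
    using distance_eq[of m n j] assms(1) by linarith
  then have "ncf_Dr \<alpha> j * \<bar>ncf_w \<alpha> n m (Suc j)\<bar> = \<bar>ncf_Dr \<alpha> (Suc j) * ncf_w \<alpha> n m j - ncf_E \<alpha> j\<bar>"
    using D(1) by (metis abs_mult abs_of_pos)
  also have "\<dots> \<le> ncf_Dr \<alpha> (Suc j) * \<bar>ncf_w \<alpha> n m j\<bar> + ncf_Dr \<alpha> (Suc j) / 2"
    using abs_triangle_ineq4[of "ncf_Dr \<alpha> (Suc j) * ncf_w \<alpha> n m j" "ncf_E \<alpha> j"] E_sign_bound[of j] Dr_pos[of "Suc j"]
    by (simp add: abs_mult)
  also have "\<dots> = ncf_Dr \<alpha> (Suc j) * (\<bar>ncf_w \<alpha> n m j\<bar> + 1/2)" by (simp add: algebra_simps)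
  also have "\<dots> \<le> 2/5 * ncf_Dr \<alpha> j * (\<bar>ncf_w \<alpha> n m j\<bar> + 1/2)" using D(2) by (intro mult_right_mono) auto
  also have "\<dots> < ncf_Dr \<alpha> j * \<bar>ncf_w \<alpha> n m j\<bar>" using D(1) w by (simp add: algebra_simps)
  finally show ?thesis using D(1) by simp
qed

lemma gamma_star_notin_lattice: "gamma_star \<alpha> \<notin> {of_int m + \<alpha> * of_int k | m k :: int. True}"
proof
  assume "gamma_star \<alpha> \<in> {of_int m + \<alpha> * of_int k | m k :: int. True}"
  then obtain m k :: int where "gamma_star \<alpha> = of_int m + \<alpha> * of_int k" by blast
  then have "of_int (-m) - \<alpha> * of_int k + gamma_star \<alpha> = 0" by simp
  then have "\<bar>ncf_w \<alpha> k (-m) (K + Suc i)\<bar> < \<bar>ncf_w \<alpha> k (-m) (K + i)\<bar>" for i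
    using ncf_w_decreasing_if_exact[of "-m" k "K + i"] by simp
  then show False using ncf_w_not_strictly_decreasing[of \<alpha> k "-m" K] by (meson not_le)
qed

end

section \<open>The inhomogeneous minimum\<close>

lemma product_le_dist_int:
  fixes n :: int and \<alpha> \<gamma> B :: real
  assumes "\<And>m::int. B \<le> \<bar>of_int n * (of_int m - \<alpha> * of_int n + \<gamma>)\<bar>"
  shows "B \<le> \<bar>of_int n\<bar> * dist_int (of_int n * \<alpha> - \<gamma>)"
proof -
  define x where "x = of_int n * \<alpha> - \<gamma>"
  have "of_int \<lfloor>x\<rfloor> - \<alpha> * of_int n + \<gamma> = - (x - of_int \<lfloor>x\<rfloor>)"
    "of_int \<lceil>x\<rceil> - \<alpha> * of_int n + \<gamma> = of_int \<lceil>x\<rceil> - x"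
    by (simp_all add: x_def algebra_simps)
  then have "\<bar>of_int n * (of_int \<lfloor>x\<rfloor> - \<alpha> * of_int n + \<gamma>)\<bar> = \<bar>of_int n\<bar> * (x - of_int \<lfloor>x\<rfloor>)"
    "\<bar>of_int n * (of_int \<lceil>x\<rceil> - \<alpha> * of_int n + \<gamma>)\<bar> = \<bar>of_int n\<bar> * (of_int \<lceil>x\<rceil> - x)"
    by (simp_all only: abs_mult abs_minus_cancel) simp_all
  then have "B \<le> \<bar>of_int n\<bar> * (x - of_int \<lfloor>x\<rfloor>)" "B \<le> \<bar>of_int n\<bar> * (of_int \<lceil>x\<rceil> - x)"
    using assms[of "\<lfloor>x\<rfloor>"] assms[of "\<lceil>x\<rceil>"] by simp_all
  then show ?thesis unfolding dist_int_def x_def[symmetric] by (simp add: min_mult_distrib_left)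
qed

lemma M_inh_ge_if_products_ge:
  assumes "\<And>\<epsilon>. \<epsilon> > 0 \<Longrightarrow>
    \<exists>N::int. \<forall>n m. N \<le> \<bar>n\<bar> \<longrightarrow> B - \<epsilon> \<le> \<bar>of_int n * (of_int m - \<alpha> * of_int n + \<gamma>)\<bar>"
  shows "ereal B \<le> M_inh \<alpha> \<gamma>"
proof -
  have bound: "ereal (B - \<epsilon>) \<le> M_inh \<alpha> \<gamma>" if \<epsilon>: "\<epsilon> > 0" for \<epsilon>
  proof -
    obtain N :: int where N: "\<And>n m. N \<le> \<bar>n\<bar> \<Longrightarrow> B - \<epsilon> \<le> \<bar>of_int n * (of_int m - \<alpha> * of_int n + \<gamma>)\<bar>"
      using assms[OF \<epsilon>] by blast
    have "B - \<epsilon> \<le> \<bar>of_int n\<bar> * dist_int (of_int n * \<alpha> - \<gamma>)" if "N \<le> \<bar>n\<bar>" for n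
      using N[OF that] by (rule product_le_dist_int)
    then have "{n. \<not> ereal (B - \<epsilon>) \<le> ereal (\<bar>of_int n\<bar> * dist_int (of_int n * \<alpha> - \<gamma>))} \<subseteq> {-N..N}"
      by force
    then have "eventually (\<lambda>n. ereal (B - \<epsilon>) \<le> ereal (\<bar>of_int n\<bar> * dist_int (of_int n * \<alpha> - \<gamma>))) cofinite"
      unfolding eventually_cofinite by (rule finite_subset) simp
    then show ?thesis unfolding M_inh_def by (rule Liminf_bounded)
  qed
  show ?thesis
  proof (rule ereal_le_real)
    fix z
    assume "M_inh \<alpha> \<gamma> \<le> ereal z"
    then have "ereal (B - \<epsilon>) \<le> ereal z" if "\<epsilon> > 0" for \<epsilon> using bound[OF that] by order
    then have "B \<le> z + \<epsilon>" if "\<epsilon> > 0" for \<epsilon> using that by fastforce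
    then show "ereal B \<le> ereal z" by (simp add: field_le_epsilon)
  qed
qed

lemma eventually_ncf_a_ge:
  assumes "ereal (of_int r) \<le> Liminf sequentially (\<lambda>i. ereal (of_int (ncf_a \<alpha> i)))"
  obtains K where "\<And>i. i \<ge> K \<Longrightarrow> ncf_a \<alpha> i \<ge> r"
proof -
  have "ereal (of_int r - 1/2) < Liminf sequentially (\<lambda>i. ereal (of_int (ncf_a \<alpha> i)))"
    using assms by (rule less_le_trans[rotated]) simp
  then have "eventually (\<lambda>i. ereal (of_int r - 1/2) < ereal (of_int (ncf_a \<alpha> i))) sequentially"
    by (rule less_LiminfD)
  then obtain K where K: "\<And>i. i \<ge> K \<Longrightarrow> of_int r - 1/2 < real_of_int (ncf_a \<alpha> i)"
    unfolding eventually_sequentially by auto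
  show thesis
  proof (rule that)
    fix i
    assume "i \<ge> K"
    with K[of i] show "ncf_a \<alpha> i \<ge> r" by linarith
  qed
qed

lemma M_inh_gamma_star_bounds:
  fixes r :: int
  assumes "0 < \<alpha>" "\<alpha> < 1" "\<alpha> \<notin> \<rat>" "r \<ge> 3"
    and "ereal (of_int r) \<le> Liminf sequentially (\<lambda>i. ereal (of_int (ncf_a \<alpha> i)))"
  shows "ereal (C_R r) \<le> M_inh \<alpha> (gamma_star \<alpha>)" "M_inh \<alpha> (gamma_star \<alpha>) \<le> rho \<alpha>"
proof -
  obtain K where "\<And>i. i \<ge> K \<Longrightarrow> ncf_a \<alpha> i \<ge> r" using eventually_ncf_a_ge[OF assms(5)] by blast
  then interpret ncf_tail \<alpha> K r using assms by unfold_locales auto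
  show "ereal (C_R r) \<le> M_inh \<alpha> (gamma_star \<alpha>)"
  proof (rule M_inh_ge_if_products_ge)
    fix \<epsilon> :: real
    assume \<epsilon>: "\<epsilon> > 0"
    obtain N where "\<And>n m. N \<le> \<bar>n\<bar> \<Longrightarrow>
        C_R r - \<epsilon> \<le> \<bar>of_int n * (of_int m - \<alpha> * of_int n + gamma_star \<alpha>)\<bar>"
      using product_lower_bound[OF \<epsilon>] by blast
    then show "\<exists>N::int. \<forall>n m. N \<le> \<bar>n\<bar> \<longrightarrow>
        C_R r - \<epsilon> \<le> \<bar>of_int n * (of_int m - \<alpha> * of_int n + gamma_star \<alpha>)\<bar>" by blast
  qed
  show "M_inh \<alpha> (gamma_star \<alpha>) \<le> rho \<alpha>"
    unfolding rho_def using gamma_star_notin_lattice by (intro SUP_upper) auto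
qed

section \<open>Closed forms of the constant\<close>

lemma divide_common_factor:
  fixes u A B C :: real
  assumes "u \<noteq> 0" "C \<noteq> 0"
  shows "(A / u) * (B / 2) / (4 * (C / u)) = (A * B) / (8 * C)"
  using assms by (simp add: field_simps)

lemma C_R_even_algebra:
  fixes r s :: real
  assumes s0: "s \<ge> 0" and ss: "s * s = r * r - 4" and r4: "r \<ge> 4"
  shows "(1 - 2 * (1 / (r + 1 - (r - s)/2))) * (1 - (r - s)/2) / (4 * (1 - 1 / (r + 1 - (r - s)/2) * ((r - s)/2)))
     = 1/4 * (r - 2) / (s + 1)"
proof -
  define u where "u = r + s + 2"
  have u0: "u > 0" using s0 r4 by (simp add: u_def)
  have d: "1 / (r + 1 - (r - s)/2) = 2 / u" by (simp add: u_def field_simps)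
  have h1: "1 - 2 * (2 / u) = (r + s - 2) / u" using u0 by (simp add: u_def field_simps)
  have h2: "1 - (r - s)/2 = (s - r + 2) / 2" by (simp add: field_simps)
  have h3: "1 - 2 / u * ((r - s)/2) = (2 * s + 2) / u" using u0 by (simp add: u_def field_simps)
  have k: "(r + s - 2) * (s - r + 2) = 4 * (r - 2)"
  proof -
    have "(r + s - 2) * (s - r + 2) = s * s - (r - 2) * (r - 2)" by (simp add: algebra_simps)
    then show ?thesis using ss by (simp add: algebra_simps)
  qed
  have "(1 - 2 * (2 / u)) * (1 - (r - s)/2) / (4 * (1 - 2 / u * ((r - s)/2)))
      = ((r + s - 2) / u) * ((s - r + 2) / 2) / (4 * ((2 * s + 2) / u))" by (simp only: h1 h2 h3)
  also have "\<dots> = ((r + s - 2) * (s - r + 2)) / (8 * (2 * s + 2))" using u0 s0 by (intro divide_common_factor) auto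
  also have "\<dots> = 4 * (r - 2) / (8 * (2 * s + 2))" by (simp only: k)
  also have "\<dots> = 1/4 * (r - 2) / (s + 1)" using s0 by (simp add: field_simps)
  finally show ?thesis by (simp only: d)
qed

lemma C_R_odd_algebra:
  fixes r s :: real
  assumes s1: "s > 1" and ss: "s * s = (r + 1) * (r + 1) - 4" and r3: "r \<ge> 3"
  shows "(1 - 2 * (1 / (r - (r + 1 - s)/2))) * (1 - (r + 1 - s)/2) / (4 * (1 - 1 / (r - (r + 1 - s)/2) * ((r + 1 - s)/2)))
     = 1/4 * (2*r - 2 - s) / (s - 1)"
proof -
  define u where "u = r - 1 + s"
  have u0: "u > 0" using s1 r3 by (simp add: u_def)
  have d: "1 / (r - (r + 1 - s)/2) = 2 / u" by (simp add: u_def field_simps)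
  have h1: "1 - 2 * (2 / u) = (r + s - 5) / u" using u0 by (simp add: u_def field_simps)
  have h2: "1 - (r + 1 - s)/2 = (s - r + 1) / 2" by (simp add: field_simps)
  have h3: "1 - 2 / u * ((r + 1 - s)/2) = (2 * s - 2) / u" using u0 by (simp add: u_def field_simps)
  have k: "(r + s - 5) * (s - r + 1) = 4 * (2*r - 2 - s)"
  proof -
    have "(r + s - 5) * (s - r + 1) = s * s - 4 * s - (r - 5) * (r - 1)" by (simp add: algebra_simps)
    then show ?thesis using ss by (simp add: algebra_simps)
  qed
  have "(1 - 2 * (2 / u)) * (1 - (r + 1 - s)/2) / (4 * (1 - 2 / u * ((r + 1 - s)/2)))
      = ((r + s - 5) / u) * ((s - r + 1) / 2) / (4 * ((2 * s - 2) / u))" by (simp only: h1 h2 h3)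
  also have "\<dots> = ((r + s - 5) * (s - r + 1)) / (8 * (2 * s - 2))" using u0 s1 by (intro divide_common_factor) auto
  also have "\<dots> = 4 * (2*r - 2 - s) / (8 * (2 * s - 2))" by (simp only: k)
  also have "\<dots> = 1/4 * (2*r - 2 - s) / (s - 1)" using s1 by (simp add: field_simps)
  finally show ?thesis by (simp only: d)
qed

lemma C_R_even_closed_form:
  fixes r :: int
  assumes "even r" "r \<ge> 3"
  shows "C_R r = 1/4 * (r - 2) / (sqrt (r^2 - 4) + 1)"
proof -
  have r4: "r \<ge> 4" using assms by presburger
  define s where "s = sqrt ((real_of_int r)^2 - 4)"
  have M2: "(real_of_int r)^2 - 4 \<ge> 0"
  proof -
    have "real_of_int r * real_of_int r \<ge> 4 * 4" using r4 by (intro mult_mono) auto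
    then show ?thesis by (simp add: power2_eq_square)
  qed
  have s0: "s \<ge> 0" using M2 by (simp add: s_def)
  have ss: "s * s = real_of_int r * real_of_int r - 4" using M2 by (simp add: s_def power2_eq_square[symmetric])
  have "C_R r = (1 - 2 * (1 / (real_of_int r + 1 - (real_of_int r - s)/2))) * (1 - (real_of_int r - s)/2) /
      (4 * (1 - 1 / (real_of_int r + 1 - (real_of_int r - s)/2) * ((real_of_int r - s)/2)))"
    using assms by (simp add: C_R_def delta_R_def beta_R_def s_def)
  also have "\<dots> = 1/4 * (real_of_int r - 2) / (s + 1)" using C_R_even_algebra[OF s0 ss] r4 by simp
  finally show ?thesis by (simp add: s_def)
qed

lemma C_R_odd_closed_form:
  fixes r :: int
  assumes "odd r" "r \<ge> 3"
  shows "C_R r = 1/4 * (2*r - 2 - sqrt ((r+1)^2 - 4)) / (sqrt ((r+1)^2 - 4) - 1)"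
proof -
  define s where "s = sqrt ((real_of_int r + 1)^2 - 4)"
  have M2: "(real_of_int r + 1)^2 - 4 > 1"
  proof -
    have "(real_of_int r + 1) * (real_of_int r + 1) \<ge> 4 * 4" using assms by (intro mult_mono) auto
    then show ?thesis by (simp add: power2_eq_square)
  qed
  have s1: "s > 1" using M2 by (simp add: s_def)
  have ss: "s * s = (real_of_int r + 1) * (real_of_int r + 1) - 4" using M2 by (simp add: s_def power2_eq_square[symmetric])
  have "C_R r = (1 - 2 * (1 / (real_of_int r - (real_of_int r + 1 - s)/2))) * (1 - (real_of_int r + 1 - s)/2) /
      (4 * (1 - 1 / (real_of_int r - (real_of_int r + 1 - s)/2) * ((real_of_int r + 1 - s)/2)))"
    using assms by (simp add: C_R_def delta_R_def beta_R_def s_def)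
  also have "\<dots> = 1/4 * (2 * real_of_int r - 2 - s) / (s - 1)" using C_R_odd_algebra[OF s1 ss] assms by simp
  finally show ?thesis by (simp add: s_def)
qed

lemma sqrt_12: "sqrt (12::real) = 2 * sqrt 3"
proof -
  have "sqrt (12::real) = sqrt (4 * 3)" by simp
  also have "\<dots> = sqrt 4 * sqrt 3" by (rule real_sqrt_mult)
  also have "sqrt (4::real) = 2" by (simp add: real_sqrt_eq_iff)
  finally show ?thesis by simp
qed

lemma C_R_3: "C_R 3 = 1 / (6 * sqrt 3 + 8)"
proof -
  have "C_R 3 = 1/4 * (2*3 - 2 - sqrt ((3+1)^2 - 4)) / (sqrt ((3+1)^2 - 4) - 1)"
    using C_R_odd_closed_form[of 3] by simp
  also have "sqrt ((3+1)^2 - 4) = (2 * sqrt 3 :: real)" using sqrt_12 by simp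
  finally have e: "C_R 3 = 1/4 * (4 - 2 * sqrt 3) / (2 * sqrt 3 - 1)" by simp
  define t :: real where "t = sqrt 3"
  have tt: "t * t = 3" by (simp add: t_def)
  have t1: "t > 1" by (simp add: t_def)
  have "1/4 * (4 - 2 * t) / (2 * t - 1) = 1 / (6 * t + 8)"
  proof -
    have "(4 - 2 * t) * (6 * t + 8) = 4 * (2 * t - 1)"
    proof -
      have "(4 - 2 * t) * (6 * t + 8) = 32 + 8 * t - 12 * (t * t)" by (simp add: algebra_simps)
      then show ?thesis using tt by simp
    qed
    then show ?thesis using t1 by (simp add: field_simps)
  qed
  then show ?thesis using e by (simp add: t_def)
qed

lemma C_R_4: "C_R 4 = 1 / (4 * sqrt 3 + 2)"
proof -
  have "C_R 4 = 1/4 * (4 - 2) / (sqrt (4^2 - 4) + 1)"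
    using C_R_even_closed_form[of 4] by simp
  also have "sqrt (4^2 - 4) = (2 * sqrt 3 :: real)" using sqrt_12 by simp
  finally have e: "C_R 4 = 1/4 * 2 / (2 * sqrt 3 + 1)" by simp
  have t0: "sqrt (3::real) > 0" by simp
  show ?thesis unfolding e using t0 by (simp add: field_simps)
qed

theorem theorem1:
  fixes \<alpha> :: real and R :: ereal
  assumes "0 < \<alpha>" "\<alpha> < 1" "\<alpha> \<notin> \<rat>"
    and R_def: "R = Liminf sequentially (\<lambda>i. ereal (of_int (ncf_a \<alpha> i)))"
    and "R \<ge> 3"
  shows "(\<forall>r::int. R = ereal (of_int r) \<longrightarrow>
            rho \<alpha> \<ge> M_inh \<alpha> (gamma_star \<alpha>)
          \<and> M_inh \<alpha> (gamma_star \<alpha>) \<ge> ereal (C_R r)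
          \<and> (even r \<longrightarrow> C_R r = 1/4 * (r - 2) / (sqrt (r^2 - 4) + 1))
          \<and> (odd r \<longrightarrow> C_R r = 1/4 * (2*r - 2 - sqrt ((r+1)^2 - 4)) / (sqrt ((r+1)^2 - 4) - 1)))
      \<and> C_R 3 = 1 / (6 * sqrt 3 + 8)
      \<and> rho \<alpha> \<ge> ereal (1 / (6 * sqrt 3 + 8))
      \<and> C_R 4 = 1 / (4 * sqrt 3 + 2)
      \<and> (R \<ge> 4 \<longrightarrow> rho \<alpha> \<ge> ereal (1 / (4 * sqrt 3 + 2)))"
proof -
  have bounds: "ereal (C_R r) \<le> M_inh \<alpha> (gamma_star \<alpha>) \<and> M_inh \<alpha> (gamma_star \<alpha>) \<le> rho \<alpha>"
    if "ereal (of_int r) \<le> R" "r \<ge> 3" for r :: int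
    using M_inh_gamma_star_bounds[OF assms(1-3) that(2)] that(1) R_def by simp
  have exact: "r \<ge> 3 \<and> ereal (C_R r) \<le> M_inh \<alpha> (gamma_star \<alpha>) \<and> M_inh \<alpha> (gamma_star \<alpha>) \<le> rho \<alpha>"
    if "R = ereal (of_int r)" for r :: int
  proof -
    have "r \<ge> 3" using that \<open>R \<ge> 3\<close> by simp
    then show ?thesis using bounds[of r] that by simp
  qed
  have "ereal (C_R 3) \<le> rho \<alpha>" using bounds[of 3] \<open>R \<ge> 3\<close> by (auto elim: order_trans)
  moreover have "ereal (C_R 4) \<le> rho \<alpha>" if "R \<ge> 4" using bounds[of 4] that by (auto elim: order_trans)
  ultimately show ?thesis
    using exact C_R_even_closed_form C_R_odd_closed_form C_R_3 C_R_4 by simp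
qed

end
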